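(* Let $F$ and $G$ be one-dimensional formal groups over a commutative ring $R$. Then for every $n$ there is a natural isomorphism $T_1 H^n(F;G)\cong H^n(F;T_1G)$, where $T_1G\cong\hat{\mathbb{G}}_a$.
   Context: For an $R$-algebra $S$, the Lubin–Tate cochain group $A^n(F;G)(S)$ is the group (under the group law of $G$) of morphisms of formal schemes $F^{\times n}\to G$ over $S$ (in coordinates: power series in $n$ variables with zero constant term, composed with the formal group laws). These form a cochain complex with coboundary $\delta$ induced by the group law of $F$: $(\delta f)(x_0,\dots,x_n)=f(x_1,\dots,x_n)-_G f(x_0+_Fx_1,x_2,\dots)+_G\cdots\pm_G f(x_0,\dots,x_{n-1})$ (standard alternating sum of face maps, with $G$-operations). $H^n(F;G)(S)$ is the $n$-th cohomology of this complex. For a group-valued functor $X$ on $R$-algebras, the tangent space at the identity is $T_1X(S)=\ker\big(X(S[\epsilon]/\epsilon^2)\to X(S)\big)$ induced by $\epsilon\mapsto 0$. *)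

theory Defs
  imports "HOL-Algebra.Algebra"
begin

section \<open>Dual numbers S[eps]/(eps^2)\<close>

datatype 'a dual = Dual (dre: 'a) (deps: 'a)

instantiation dual :: (comm_ring_1) comm_ring_1
begin
definition zero_dual_def: "0 = Dual 0 0"
definition one_dual_def: "1 = Dual 1 0"
definition plus_dual_def: "x + y = Dual (dre x + dre y) (deps x + deps y)"
definition minus_dual_def: "x - y = Dual (dre x - dre y) (deps x - deps y)"
definition uminus_dual_def: "- x = Dual (- dre x) (- deps x)"
definition times_dual_def: "x * y = Dual (dre x * dre y) (dre x * deps y + deps x * dre y)"
instance
  by standard (auto simp: zero_dual_def one_dual_def plus_dual_def minus_dual_def
      uminus_dual_def times_dual_def dual.expand algebra_simps)
end

definition dual_map :: "('a \<Rightarrow> 'b) \<Rightarrow> 'a dual \<Rightarrow> 'b dual" where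
  "dual_map \<psi> x = Dual (\<psi> (dre x)) (\<psi> (deps x))"

definition is_ring_hom :: "('a::comm_ring_1 \<Rightarrow> 'b::comm_ring_1) \<Rightarrow> bool" where
  "is_ring_hom \<phi> \<longleftrightarrow> \<phi> 1 = 1 \<and> (\<forall>x y. \<phi> (x + y) = \<phi> x + \<phi> y) \<and> (\<forall>x y. \<phi> (x * y) = \<phi> x * \<phi> y)"

text \<open>A power series in k variables is its coefficient function on exponent vectors,
  represented as lists of length k; coefficients at lists of other lengths vanish.\<close>

type_synonym 'a mps = "nat list \<Rightarrow> 'a"

definition mps :: "nat \<Rightarrow> ('a::zero) mps set" where
  "mps k = {f. \<forall>e. length e \<noteq> k \<longrightarrow> f e = 0}"

definition mps_zero :: "('a::zero) mps" where
  "mps_zero = (\<lambda>e. 0)"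

definition mps_one :: "nat \<Rightarrow> ('a::{zero,one}) mps" where
  "mps_one k = (\<lambda>e. if e = replicate k 0 then 1 else 0)"

definition mps_var :: "nat \<Rightarrow> nat \<Rightarrow> ('a::{zero,one}) mps" where
  "mps_var k i = (\<lambda>e. if e = (replicate k 0)[i := 1] then 1 else 0)"

definition mps_add :: "('a::plus) mps \<Rightarrow> 'a mps \<Rightarrow> 'a mps" where
  "mps_add f g = (\<lambda>e. f e + g e)"

definition divisors_exp :: "nat list \<Rightarrow> nat list set" where
  "divisors_exp e = {a. list_all2 (\<le>) a e}"

definition mps_mult :: "nat \<Rightarrow> ('a::comm_ring_1) mps \<Rightarrow> 'a mps \<Rightarrow> 'a mps" where
  "mps_mult k f g = (\<lambda>e. if length e = k
      then (\<Sum>a\<in>divisors_exp e. f a * g (map2 (-) e a)) else 0)"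

definition mps_pow :: "nat \<Rightarrow> ('a::comm_ring_1) mps \<Rightarrow> nat \<Rightarrow> 'a mps" where
  "mps_pow k f m = ((mps_mult k f) ^^ m) (mps_one k)"

definition mps_prod :: "nat \<Rightarrow> ('a::comm_ring_1) mps list \<Rightarrow> 'a mps" where
  "mps_prod k fs = foldr (mps_mult k) fs (mps_one k)"

text \<open>Composition f(g_1,...,g_n) of a series f in n = length gs variables with series
  g_i in k variables having zero constant term.  Only exponents d with |d| \<le> |e|
  can contribute to the coefficient at e.\<close>
definition mps_comp :: "nat \<Rightarrow> ('a::comm_ring_1) mps \<Rightarrow> 'a mps list \<Rightarrow> 'a mps" where
  "mps_comp k f gs = (\<lambda>e. if length e = k then
      (\<Sum>d\<in>{d. length d = length gs \<and> sum_list d \<le> sum_list e}.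
          f d * mps_prod k (map2 (mps_pow k) gs d) e) else 0)"

definition mps_map :: "('a \<Rightarrow> 'b) \<Rightarrow> 'a mps \<Rightarrow> 'b mps" where
  "mps_map \<psi> f = (\<lambda>e. \<psi> (f e))"

definition fgl :: "('a::comm_ring_1) mps \<Rightarrow> bool" where
  "fgl F \<longleftrightarrow> F \<in> mps 2 \<and>
     mps_comp 1 F [mps_var 1 0, mps_zero] = mps_var 1 0 \<and>
     mps_comp 1 F [mps_zero, mps_var 1 0] = mps_var 1 0 \<and>
     mps_comp 2 F [mps_var 2 1, mps_var 2 0] = F \<and>
     mps_comp 3 F [mps_comp 3 F [mps_var 3 0, mps_var 3 1], mps_var 3 2]
       = mps_comp 3 F [mps_var 3 0, mps_comp 3 F [mps_var 3 1, mps_var 3 2]]"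

definition Ga :: "('a::comm_ring_1) mps" where
  "Ga = mps_add (mps_var 2 0) (mps_var 2 1)"

definition fgl_inv :: "('a::comm_ring_1) mps \<Rightarrow> 'a mps" where
  "fgl_inv G = (SOME i. i \<in> mps 1 \<and> i [0] = 0 \<and> mps_comp 1 G [mps_var 1 0, i] = mps_zero)"

definition cochains :: "nat \<Rightarrow> ('a::comm_ring_1) mps set" where
  "cochains n = {f \<in> mps n. f (replicate n 0) = 0}"

definition cadd :: "('a::comm_ring_1) mps \<Rightarrow> nat \<Rightarrow> 'a mps \<Rightarrow> 'a mps \<Rightarrow> 'a mps" where
  "cadd G n f g = mps_comp n G [f, g]"

definition cneg :: "('a::comm_ring_1) mps \<Rightarrow> nat \<Rightarrow> 'a mps \<Rightarrow> 'a mps" where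
  "cneg G n f = mps_comp n (fgl_inv G) [f]"

definition cochain_group :: "('a::comm_ring_1) mps \<Rightarrow> nat \<Rightarrow> 'a mps monoid" where
  "cochain_group G n = \<lparr>carrier = cochains n, monoid.mult = cadd G n, one = mps_zero\<rparr>"

text \<open>The substitutions defining the face maps A^n \<rightarrow> A^(n+1), i = 0..n+1:
  d_0 f = f(x_1,...,x_n), d_i f = f(x_0,...,x_(i-1) +_F x_i,...,x_n) for 1 \<le> i \<le> n,
  d_(n+1) f = f(x_0,...,x_(n-1)).\<close>
definition face_subst :: "('a::comm_ring_1) mps \<Rightarrow> nat \<Rightarrow> nat \<Rightarrow> 'a mps list" where
  "face_subst F n i =
     (if i = 0 then map (\<lambda>j. mps_var (n+1) (j+1)) [0..<n]
      else if i \<le> n then map (\<lambda>j. if j < i - 1 then mps_var (n+1) j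
                                  else if j = i - 1 then mps_comp (n+1) F [mps_var (n+1) (i-1), mps_var (n+1) i]
                                  else mps_var (n+1) (j+1)) [0..<n]
      else map (\<lambda>j. mps_var (n+1) j) [0..<n])"

definition face :: "('a::comm_ring_1) mps \<Rightarrow> nat \<Rightarrow> nat \<Rightarrow> 'a mps \<Rightarrow> 'a mps" where
  "face F n i f = mps_comp (n+1) f (face_subst F n i)"

definition coboundary :: "('a::comm_ring_1) mps \<Rightarrow> 'a mps \<Rightarrow> nat \<Rightarrow> 'a mps \<Rightarrow> 'a mps" where
  "coboundary F G n f =
     foldl (\<lambda>acc i. cadd G (n+1) acc
              (if even i then face F n i f else cneg G (n+1) (face F n i f)))
           mps_zero [0..<n+2]"

definition cocycles :: "('a::comm_ring_1) mps \<Rightarrow> 'a mps \<Rightarrow> nat \<Rightarrow> 'a mps set" where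
  "cocycles F G n = {f \<in> cochains n. coboundary F G n f = mps_zero}"

definition coboundaries :: "('a::comm_ring_1) mps \<Rightarrow> 'a mps \<Rightarrow> nat \<Rightarrow> 'a mps set" where
  "coboundaries F G n =
     (if n = 0 then {mps_zero} else coboundary F G (n - 1) ` cochains (n - 1))"

definition cocycle_group :: "('a::comm_ring_1) mps \<Rightarrow> 'a mps \<Rightarrow> nat \<Rightarrow> 'a mps monoid" where
  "cocycle_group F G n = (cochain_group G n)\<lparr>carrier := cocycles F G n\<rparr>"

definition cohom :: "('a::comm_ring_1) mps \<Rightarrow> 'a mps \<Rightarrow> nat \<Rightarrow> 'a mps set monoid" where
  "cohom F G n = cocycle_group F G n Mod coboundaries F G n"

definition cohom_class :: "('a::comm_ring_1) mps \<Rightarrow> 'a mps \<Rightarrow> nat \<Rightarrow> 'a mps \<Rightarrow> 'a mps set" where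
  "cohom_class F G n f = coboundaries F G n #>\<^bsub>cocycle_group F G n\<^esub> f"

definition cohom_map :: "('a \<Rightarrow> 'b) \<Rightarrow> ('b::comm_ring_1) mps \<Rightarrow> 'b mps \<Rightarrow> nat
     \<Rightarrow> ('a::comm_ring_1) mps set \<Rightarrow> 'b mps set" where
  "cohom_map \<psi> F' G' n C = cohom_class F' G' n (mps_map \<psi> (SOME f. f \<in> C))"

definition dual_base :: "('r \<Rightarrow> 's::comm_ring_1) \<Rightarrow> 'r \<Rightarrow> 's dual" where
  "dual_base \<phi> r = Dual (\<phi> r) 0"

definition cohomR :: "('r \<Rightarrow> 's::comm_ring_1) \<Rightarrow> 'r mps \<Rightarrow> 'r mps \<Rightarrow> nat \<Rightarrow> 's mps set monoid" where
  "cohomR \<phi> F G n = cohom (mps_map \<phi> F) (mps_map \<phi> G) n"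

text \<open>T_1 H^n(F;G)(S) = ker(H^n(F;G)(S[eps]) \<rightarrow> H^n(F;G)(S)), induced by eps \<mapsto> 0.\<close>
definition tangent_cohom :: "('r \<Rightarrow> 's::comm_ring_1) \<Rightarrow> 'r mps \<Rightarrow> 'r mps \<Rightarrow> nat \<Rightarrow> 's dual mps set monoid" where
  "tangent_cohom \<phi> F G n =
     (cohomR (dual_base \<phi>) F G n)\<lparr>carrier :=
        {C \<in> carrier (cohomR (dual_base \<phi>) F G n).
           cohom_map dre (mps_map \<phi> F) (mps_map \<phi> G) n C = \<one>\<^bsub>cohomR \<phi> F G n\<^esub>}\<rparr>"

definition cohom_Ga :: "('r \<Rightarrow> 's::comm_ring_1) \<Rightarrow> 'r mps \<Rightarrow> nat \<Rightarrow> 's mps set monoid" where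
  "cohom_Ga \<phi> F n = cohom (mps_map \<phi> F) Ga n"

definition tangent_comparison :: "('r \<Rightarrow> 's::comm_ring_1) \<Rightarrow> 'r mps \<Rightarrow> 'r mps \<Rightarrow> nat
     \<Rightarrow> 's mps set \<Rightarrow> 's dual mps set" where
  "tangent_comparison \<phi> F G n C =
     cohom_class (mps_map (dual_base \<phi>) F) (mps_map (dual_base \<phi>) G) n
        (mps_map (\<lambda>s. Dual 0 s) (SOME h. h \<in> C))"

end

theory Submission
  imports Defs
begin

text \<open>Over S[eps], eps^2 = 0, every cochain x decomposes as x = lift(x mod eps) +_G eps k.
  Because G(X,Y) = X + Y + (terms of degree at least 2) and the product of two multiples of eps
  vanishes, G restricted to multiples of eps is the additive law: eps a +_G eps b = eps (a + b).
  Hence h \<mapsto> eps h is a map of cochain complexes A(F;G_a)(S) \<rightarrow> A(F;G)(S[eps]), and the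
  decomposition shows that on cohomology it is injective with image the kernel of reduction
  mod eps. Naturality holds because all maps involved are induced by base change of coefficients.\<close>

definition exp_add :: "nat list \<Rightarrow> nat list \<Rightarrow> nat list" where
  "exp_add a b = map2 (+) a b"

lemma length_exp_add[simp]: "length (exp_add a b) = min (length a) (length b)"
  by (simp add: exp_add_def)

lemma exp_add_comm: "exp_add a b = exp_add b a"
proof (induction a arbitrary: b)
  case Nil then show ?case by (simp add: exp_add_def)
next
  case (Cons x a) then show ?case by (cases b) (auto simp: exp_add_def)
qed

lemma exp_add_Cons[simp]: "exp_add (x#a) (y#b) = (x+y) # exp_add a b"
  by (simp add: exp_add_def)
lemma exp_add_Nil[simp]: "exp_add [] b = []" "exp_add a [] = []"
  by (auto simp: exp_add_def)

lemma exp_add_assoc: "exp_add (exp_add a b) c = exp_add a (exp_add b c)"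
proof (induction a arbitrary: b c)
  case Nil then show ?case by simp
next
  case (Cons x a) then show ?case
    by (cases b; cases c) simp_all
qed

lemma sum_list_exp_add: "length a = length b \<Longrightarrow> sum_list (exp_add a b) = sum_list a + sum_list b"
proof (induction a arbitrary: b)
  case Nil then show ?case by simp
next
  case (Cons x a) then show ?case by (cases b) auto
qed

lemma exp_add_zeros: "length a = n \<Longrightarrow> exp_add (replicate n 0) a = a"
proof (induction a arbitrary: n)
  case Nil then show ?case by simp
next
  case (Cons x a) then show ?case by (cases n) auto
qed

lemma exp_add_sub: "list_all2 (\<le>) a e \<Longrightarrow> exp_add a (map2 (-) e a) = e"
proof (induction a arbitrary: e)
  case Nil then show ?case by simp
next
  case (Cons x a) then show ?case by (cases e) (auto simp: exp_add_def)
qed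

lemma sub_exp_add: "length a = length b \<Longrightarrow> map2 (-) (exp_add a b) a = b"
proof (induction a arbitrary: b)
  case Nil then show ?case by simp
next
  case (Cons x a) then show ?case by (cases b) auto
qed

lemma le_exp_add: "length a = length b \<Longrightarrow> list_all2 (\<le>) a (exp_add a b)"
proof (induction a arbitrary: b)
  case Nil then show ?case by simp
next
  case (Cons x a) then show ?case by (cases b) auto
qed

lemma finite_length_sum_list_le: "finite {d::nat list. length d = m \<and> sum_list d \<le> N}"
proof -
  have "{d::nat list. length d = m \<and> sum_list d \<le> N} \<subseteq> {d. set d \<subseteq> {..N} \<and> length d = m}"
  proof (rule subsetI, rule CollectI, rule conjI)
    fix d :: "nat list" assume d: "d \<in> {d. length d = m \<and> sum_list d \<le> N}"
    show "set d \<subseteq> {..N}"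
    proof
      fix x assume "x \<in> set d"
      then have "x \<le> sum_list d" using member_le_sum_list[of x d] by simp
      then show "x \<in> {..N}" using d by simp
    qed
    show "length d = m" using d by simp
  qed
  moreover have "finite {d. set d \<subseteq> {..N::nat} \<and> length d = m}"
    by (rule finite_lists_length_eq) simp
  ultimately show ?thesis by (rule finite_subset)
qed

definition exp_splits :: "nat list \<Rightarrow> (nat list \<times> nat list) set" where
  "exp_splits e = {(a,b). length a = length e \<and> length b = length e \<and> exp_add a b = e}"

lemma exp_splits_bounded: "exp_splits e \<subseteq> {d. length d = length e \<and> sum_list d \<le> sum_list e} \<times> {d. length d = length e \<and> sum_list d \<le> sum_list e}"
proof
  fix p assume "p \<in> exp_splits e"
  then obtain a b where p: "p = (a,b)" "length a = length e" "length b = length e" "exp_add a b = e"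
    by (cases p) (auto simp: exp_splits_def)
  then have "sum_list e = sum_list a + sum_list b" using sum_list_exp_add[of a b] by simp
  then show "p \<in> {d. length d = length e \<and> sum_list d \<le> sum_list e} \<times> {d. length d = length e \<and> sum_list d \<le> sum_list e}"
    using p by simp
qed

lemma finite_exp_splits[simp]: "finite (exp_splits e)"
  by (rule finite_subset[OF exp_splits_bounded]) (simp add: finite_length_sum_list_le)

lemma list_all2_le_sum_list: "list_all2 (\<le>) (a::nat list) e \<Longrightarrow> length a = length e \<and> sum_list a \<le> sum_list e"
proof (induction rule: list_all2_induct)
  case Nil then show ?case by simp
next
  case (Cons x xs y ys) then show ?case by (simp add: add_mono)
qed

lemma finite_divisors_exp[simp]: "finite (divisors_exp e)"
proof -
  have "divisors_exp e \<subseteq> {d. length d = length e \<and> sum_list d \<le> sum_list e}"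
  proof
    fix a assume "a \<in> divisors_exp e"
    then have "list_all2 (\<le>) a e" by (simp add: divisors_exp_def)
    then show "a \<in> {d. length d = length e \<and> sum_list d \<le> sum_list e}"
      using list_all2_le_sum_list by auto
  qed
  then show ?thesis by (rule finite_subset) (simp add: finite_length_sum_list_le)
qed

lemma mps_mult_exp_splits:
  assumes "length e = k"
  shows "mps_mult k f g e = (\<Sum>(a,b)\<in>exp_splits e. f a * g b)"
proof -
  have "mps_mult k f g e = (\<Sum>a\<in>divisors_exp e. f a * g (map2 (-) e a))"
    using assms by (simp add: mps_mult_def)
  also have "\<dots> = (\<Sum>(a,b)\<in>exp_splits e. f a * g b)"
  proof (rule sum.reindex_bij_witness[where i=fst and j="\<lambda>a. (a, map2 (-) e a)"])
    fix p assume p: "p \<in> exp_splits e"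
    obtain a b where ab: "p = (a,b)" by (cases p)
    with p have l: "length a = length e" "length b = length e" "exp_add a b = e" by (auto simp: exp_splits_def)
    show "(fst p, map2 (-) e (fst p)) = p" using l ab sub_exp_add[of a b] by simp
    show "fst p \<in> divisors_exp e" using l ab le_exp_add[of a b] by (simp add: divisors_exp_def)
  next
    fix a assume a: "a \<in> divisors_exp e"
    then have le: "list_all2 (\<le>) a e" by (simp add: divisors_exp_def)
    then have la: "length a = length e" by (simp add: list_all2_lengthD)
    show "fst (a, map2 (-) e a) = a" by simp
    show "(a, map2 (-) e a) \<in> exp_splits e" using la exp_add_sub[OF le] by (simp add: exp_splits_def)
    show "(case (a, map2 (-) e a) of (a, b) \<Rightarrow> f a * g b) = f a * g (map2 (-) e a)" by simp
  qed
  finally show ?thesis .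
qed

lemma mps_out: "f \<in> mps k \<Longrightarrow> length e \<noteq> k \<Longrightarrow> f e = 0"
  by (simp add: mps_def)

lemma mps_mult_out: "length e \<noteq> k \<Longrightarrow> mps_mult k f g e = 0"
  by (simp add: mps_mult_def)

lemma mps_mult_in_mps: "mps_mult k f g \<in> mps k"
  by (simp add: mps_def mps_mult_def)

lemma mps_mult_comm: "mps_mult k f g = mps_mult k g f"
proof (rule ext)
  fix e show "mps_mult k f g e = mps_mult k g f e"
  proof (cases "length e = k")
    case True
    have "(\<Sum>(a,b)\<in>exp_splits e. f a * g b) = (\<Sum>(a,b)\<in>exp_splits e. g a * f b)"
    proof (rule sum.reindex_bij_witness[where i=prod.swap and j=prod.swap])
      fix p assume "p \<in> exp_splits e" then show "prod.swap p \<in> exp_splits e"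
        by (cases p) (simp add: exp_splits_def exp_add_comm)
    next
      fix p assume "p \<in> exp_splits e" then show "prod.swap p \<in> exp_splits e"
        by (cases p) (simp add: exp_splits_def exp_add_comm)
    next
      fix p assume "p \<in> exp_splits e" then show "(case prod.swap p of (a, b) \<Rightarrow> g a * f b) = (case p of (a, b) \<Rightarrow> f a * g b)"
        by (cases p) (simp add: mult.commute)
    qed simp_all
    then show ?thesis using True by (simp add: mps_mult_exp_splits)
  qed (simp add: mps_mult_def)
qed

definition exp_splits3 :: "nat list \<Rightarrow> (nat list \<times> nat list \<times> nat list) set" where
  "exp_splits3 e = {(a,b,c). length a = length e \<and> length b = length e \<and> length c = length e \<and> exp_add (exp_add a b) c = e}"

lemma finite_exp_splits3[simp]: "finite (exp_splits3 e)"
proof -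
  let ?B = "{d. length d = length e \<and> sum_list d \<le> sum_list e}"
  have "exp_splits3 e \<subseteq> ?B \<times> ?B \<times> ?B"
  proof
    fix t assume "t \<in> exp_splits3 e"
    then obtain a b c where t: "t = (a,b,c)" "length a = length e" "length b = length e"
      "length c = length e" "exp_add (exp_add a b) c = e" by (cases t) (auto simp: exp_splits3_def)
    then have "sum_list e = sum_list a + sum_list b + sum_list c"
      using sum_list_exp_add[of "exp_add a b" c] sum_list_exp_add[of a b] by simp
    then show "t \<in> ?B \<times> ?B \<times> ?B" using t by simp
  qed
  then show ?thesis by (rule finite_subset) (simp add: finite_length_sum_list_le)
qed

lemma sum_exp_splits_right:
  "(\<Sum>(a,x)\<in>exp_splits e. \<Sum>(b,c)\<in>exp_splits x. F a b c) = (\<Sum>(a,b,c)\<in>exp_splits3 e. F a b c)"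
proof -
  have "(\<Sum>(a,x)\<in>exp_splits e. \<Sum>(b,c)\<in>exp_splits x. F a b c)
      = (\<Sum>ax\<in>exp_splits e. \<Sum>bc\<in>exp_splits (snd ax). F (fst ax) (fst bc) (snd bc))"
    by (simp add: case_prod_beta)
  also have "\<dots> = (\<Sum>(ax,bc)\<in>(SIGMA ax:exp_splits e. exp_splits (snd ax)). F (fst ax) (fst bc) (snd bc))"
    by (rule sum.Sigma) simp_all
  also have "\<dots> = (\<Sum>(a,b,c)\<in>exp_splits3 e. F a b c)"
  proof (rule sum.reindex_bij_witness[where i="\<lambda>(a,b,c). ((a, exp_add b c), (b,c))" and j="\<lambda>((a,x),(b,c)). (a,b,c)"])
    fix p assume p: "p \<in> (SIGMA ax:exp_splits e. exp_splits (snd ax))"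
    obtain a x b c where pp: "p = ((a,x),(b,c))" by (cases p) auto
    with p have l: "length a = length e" "length x = length e" "exp_add a x = e"
        "length b = length x" "length c = length x" "exp_add b c = x"
      by (auto simp: exp_splits_def)
    show "(case case p of (x, xa) \<Rightarrow> (case x of (a, x) \<Rightarrow> \<lambda>(b, c). (a, b, c)) xa of (a, b, c) \<Rightarrow> ((a, exp_add b c), b, c)) = p"
      using pp l by simp
    show "(case p of (x, xa) \<Rightarrow> (case x of (a, x) \<Rightarrow> \<lambda>(b, c). (a, b, c)) xa) \<in> exp_splits3 e"
      using pp l by (simp add: exp_splits3_def exp_add_assoc)
    show "(case case p of (x, xa) \<Rightarrow> (case x of (a, x) \<Rightarrow> \<lambda>(b, c). (a, b, c)) xa of (a, b, c) \<Rightarrow> F a b c) =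
         (case p of (ax, bc) \<Rightarrow> F (fst ax) (fst bc) (snd bc))"
      using pp by simp
  next
    fix t assume t: "t \<in> exp_splits3 e"
    obtain a b c where tt: "t = (a,b,c)" by (cases t) auto
    with t have l: "length a = length e" "length b = length e" "length c = length e" "exp_add (exp_add a b) c = e"
      by (auto simp: exp_splits3_def)
    show "(case case t of (a, b, c) \<Rightarrow> ((a, exp_add b c), b, c) of (x, xa) \<Rightarrow> (case x of (a, x) \<Rightarrow> \<lambda>(b, c). (a, b, c)) xa) = t"
      using tt by simp
    show "(case t of (a, b, c) \<Rightarrow> ((a, exp_add b c), b, c)) \<in> (SIGMA ax:exp_splits e. exp_splits (snd ax))"
      using tt l by (simp add: exp_splits_def exp_add_assoc)
  qed
  finally show ?thesis .
qed

lemma sum_exp_splits_left: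
  "(\<Sum>(x,c)\<in>exp_splits e. \<Sum>(a,b)\<in>exp_splits x. F a b c) = (\<Sum>(a,b,c)\<in>exp_splits3 e. F a b c)"
proof -
  have "(\<Sum>(x,c)\<in>exp_splits e. \<Sum>(a,b)\<in>exp_splits x. F a b c)
      = (\<Sum>xc\<in>exp_splits e. \<Sum>ab\<in>exp_splits (fst xc). F (fst ab) (snd ab) (snd xc))"
    by (simp add: case_prod_beta)
  also have "\<dots> = (\<Sum>(xc,ab)\<in>(SIGMA xc:exp_splits e. exp_splits (fst xc)). F (fst ab) (snd ab) (snd xc))"
    by (rule sum.Sigma) simp_all
  also have "\<dots> = (\<Sum>(a,b,c)\<in>exp_splits3 e. F a b c)"
  proof (rule sum.reindex_bij_witness[where i="\<lambda>(a,b,c). ((exp_add a b, c), (a,b))" and j="\<lambda>((x,c),(a,b)). (a,b,c)"])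
    fix p assume p: "p \<in> (SIGMA xc:exp_splits e. exp_splits (fst xc))"
    obtain a x b c where pp: "p = ((x,c),(a,b))" by (cases p) auto
    with p have l: "length x = length e" "length c = length e" "exp_add x c = e"
        "length a = length x" "length b = length x" "exp_add a b = x"
      by (auto simp: exp_splits_def)
    show "(case case p of (x, xa) \<Rightarrow> (case x of (x, c) \<Rightarrow> \<lambda>(a, b). (a, b, c)) xa of (a, b, c) \<Rightarrow> ((exp_add a b, c), a, b)) = p"
      using pp l by simp
    show "(case p of (x, xa) \<Rightarrow> (case x of (x, c) \<Rightarrow> \<lambda>(a, b). (a, b, c)) xa) \<in> exp_splits3 e"
      using pp l by (simp add: exp_splits3_def)
    show "(case case p of (x, xa) \<Rightarrow> (case x of (x, c) \<Rightarrow> \<lambda>(a, b). (a, b, c)) xa of (a, b, c) \<Rightarrow> F a b c) =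
         (case p of (xc, ab) \<Rightarrow> F (fst ab) (snd ab) (snd xc))"
      using pp by simp
  next
    fix t assume t: "t \<in> exp_splits3 e"
    obtain a b c where tt: "t = (a,b,c)" by (cases t) auto
    with t have l: "length a = length e" "length b = length e" "length c = length e" "exp_add (exp_add a b) c = e"
      by (auto simp: exp_splits3_def)
    show "(case case t of (a, b, c) \<Rightarrow> ((exp_add a b, c), a, b) of (x, xa) \<Rightarrow> (case x of (x, c) \<Rightarrow> \<lambda>(a, b). (a, b, c)) xa) = t"
      using tt by simp
    show "(case t of (a, b, c) \<Rightarrow> ((exp_add a b, c), a, b)) \<in> (SIGMA xc:exp_splits e. exp_splits (fst xc))"
      using tt l by (simp add: exp_splits_def)
  qed
  finally show ?thesis .
qed

lemma mps_mult_assoc: "mps_mult k (mps_mult k f g) h = mps_mult k f (mps_mult k g h)"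
proof (rule ext)
  fix e show "mps_mult k (mps_mult k f g) h e = mps_mult k f (mps_mult k g h) e"
  proof (cases "length e = k")
    case True
    have "mps_mult k (mps_mult k f g) h e = (\<Sum>(x,c)\<in>exp_splits e. mps_mult k f g x * h c)"
      using True by (simp add: mps_mult_exp_splits)
    also have "\<dots> = (\<Sum>(x,c)\<in>exp_splits e. (\<Sum>(a,b)\<in>exp_splits x. f a * g b) * h c)"
    proof (rule sum.cong[OF refl])
      fix p assume "p \<in> exp_splits e"
      then show "(case p of (x, c) \<Rightarrow> mps_mult k f g x * h c) = (case p of (x, c) \<Rightarrow> (\<Sum>(a, b)\<in>exp_splits x. f a * g b) * h c)"
        using True by (cases p) (simp add: exp_splits_def mps_mult_exp_splits)
    qed
    also have "\<dots> = (\<Sum>(x,c)\<in>exp_splits e. \<Sum>(a,b)\<in>exp_splits x. f a * g b * h c)"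
      by (simp add: sum_distrib_right case_prod_beta)
    also have "\<dots> = (\<Sum>(a,b,c)\<in>exp_splits3 e. f a * g b * h c)" by (rule sum_exp_splits_left)
    also have "\<dots> = (\<Sum>(a,x)\<in>exp_splits e. \<Sum>(b,c)\<in>exp_splits x. f a * (g b * h c))"
      by (simp add: sum_exp_splits_right mult.assoc)
    also have "\<dots> = (\<Sum>(a,x)\<in>exp_splits e. f a * (\<Sum>(b,c)\<in>exp_splits x. g b * h c))"
      by (simp add: sum_distrib_left case_prod_beta)
    also have "\<dots> = (\<Sum>(a,x)\<in>exp_splits e. f a * mps_mult k g h x)"
    proof (rule sum.cong[OF refl])
      fix p assume "p \<in> exp_splits e"
      then show "(case p of (a, x) \<Rightarrow> f a * (\<Sum>(b, c)\<in>exp_splits x. g b * h c)) = (case p of (a, x) \<Rightarrow> f a * mps_mult k g h x)"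
        using True by (cases p) (simp add: exp_splits_def mps_mult_exp_splits)
    qed
    also have "\<dots> = mps_mult k f (mps_mult k g h) e"
      using True by (simp add: mps_mult_exp_splits)
    finally show ?thesis .
  qed (simp add: mps_mult_def)
qed

lemma mps_one_in[simp]: "mps_one k \<in> mps k"
  by (simp add: mps_def mps_one_def)

lemma mps_mult_one_right: assumes "f \<in> mps k" shows "mps_mult k f (mps_one k) = f"
proof (rule ext)
  fix e show "mps_mult k f (mps_one k) e = f e"
  proof (cases "length e = k")
    case True
    have "mps_mult k f (mps_one k) e = (\<Sum>a\<in>divisors_exp e. if a = e then f a else 0)"
    proof -
      have "\<And>a. a \<in> divisors_exp e \<Longrightarrow> f a * mps_one k (map2 (-) e a) = (if a = e then f a else 0)"
      proof -
        fix a assume "a \<in> divisors_exp e"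
        then have le: "list_all2 (\<le>) a e" by (simp add: divisors_exp_def)
        then have la: "length a = length e" by (simp add: list_all2_lengthD)
        have "map2 (-) e a = replicate k 0 \<longleftrightarrow> a = e"
        proof
          assume "map2 (-) e a = replicate k 0"
          then have "exp_add a (replicate k 0) = e" using exp_add_sub[OF le] by simp
          then show "a = e" using la True exp_add_zeros[of a k] exp_add_comm by metis
        next
          assume "a = e" then show "map2 (-) e a = replicate k 0" using True
            by (induction e arbitrary: k a) auto
        qed
        then show "f a * mps_one k (map2 (-) e a) = (if a = e then f a else 0)"
          by (simp add: mps_one_def)
      qed
      then show ?thesis using True by (simp add: mps_mult_def)
    qed
    also have "\<dots> = f e"
    proof -
      have "e \<in> divisors_exp e" by (simp add: divisors_exp_def list_all2_refl)
      then show ?thesis by (simp add: sum.delta[OF finite_divisors_exp])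
    qed
    finally show ?thesis .
  qed (use assms in \<open>simp add: mps_mult_def mps_def\<close>)
qed

lemma mps_mult_one_left: "f \<in> mps k \<Longrightarrow> mps_mult k (mps_one k) f = f"
  using mps_mult_comm mps_mult_one_right by metis

definition ord_ge :: "nat \<Rightarrow> ('a::zero) mps \<Rightarrow> bool" where
  "ord_ge p f \<longleftrightarrow> (\<forall>e. sum_list e < p \<longrightarrow> f e = 0)"

lemma sum_list_zero_iff: "sum_list (e::nat list) = 0 \<longleftrightarrow> e = replicate (length e) 0"
  by (induction e) auto

lemma cochain_ord: assumes "f \<in> cochains k" shows "ord_ge 1 f"
  unfolding ord_ge_def
proof (intro allI impI)
  fix e :: "nat list" assume "sum_list e < 1"
  then have "e = replicate (length e) 0" using sum_list_zero_iff by simp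
  then show "f e = 0" using assms by (cases "length e = k") (auto simp: cochains_def mps_def)
qed

lemma ord_ge_0[simp]: "ord_ge 0 f" by (simp add: ord_ge_def)

lemma mps_mult_ord: assumes "ord_ge p f" "ord_ge q g" shows "ord_ge (p+q) (mps_mult k f g)"
  unfolding ord_ge_def
proof (intro allI impI)
  fix e :: "nat list" assume e: "sum_list e < p + q"
  show "mps_mult k f g e = 0"
  proof (cases "length e = k")
    case True
    have "(\<Sum>(a,b)\<in>exp_splits e. f a * g b) = 0"
    proof (rule sum.neutral, rule ballI)
      fix x assume "x \<in> exp_splits e"
      then obtain a b where x: "x = (a,b)" "length a = length e" "length b = length e" "exp_add a b = e"
        by (cases x) (auto simp: exp_splits_def)
      then have "sum_list a + sum_list b < p + q" using e sum_list_exp_add[of a b] by simp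
      then have "sum_list a < p \<or> sum_list b < q" by linarith
      then have "f a = 0 \<or> g b = 0" using assms unfolding ord_ge_def by blast
      then show "(case x of (a, b) \<Rightarrow> f a * g b) = 0" using x(1) by auto
    qed
    then show ?thesis using True by (simp add: mps_mult_exp_splits)
  qed (simp add: mps_mult_def)
qed

lemma mps_pow_0[simp]: "mps_pow k f 0 = mps_one k" by (simp add: mps_pow_def)
lemma mps_pow_Suc: "mps_pow k f (Suc m) = mps_mult k f (mps_pow k f m)" by (simp add: mps_pow_def)

lemma mps_pow_in[simp]: "mps_pow k f m \<in> mps k"
  by (cases m) (simp_all add: mps_pow_Suc mps_mult_in_mps)

lemma mps_pow_ord: "ord_ge 1 f \<Longrightarrow> ord_ge m (mps_pow k f m)"
proof (induction m)
  case 0 then show ?case by simp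
next
  case (Suc m) then show ?case using mps_mult_ord[of 1 f m "mps_pow k f m" k] by (simp add: mps_pow_Suc)
qed

lemma mps_pow_add: "mps_pow k f (m + n) = mps_mult k (mps_pow k f m) (mps_pow k f n)"
proof (induction m)
  case 0 then show ?case by (simp add: mps_mult_one_left)
next
  case (Suc m) then show ?case by (simp add: mps_pow_Suc mps_mult_assoc)
qed

lemma mps_prod_Nil[simp]: "mps_prod k [] = mps_one k" by (simp add: mps_prod_def)
lemma mps_prod_Cons[simp]: "mps_prod k (f # fs) = mps_mult k f (mps_prod k fs)" by (simp add: mps_prod_def)
lemma mps_prod_in[simp]: "mps_prod k fs \<in> mps k"
  by (cases fs) (simp_all add: mps_mult_in_mps)

definition mps_monom :: "nat \<Rightarrow> ('a::comm_ring_1) mps list \<Rightarrow> nat list \<Rightarrow> 'a mps" where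
  "mps_monom k gs d = mps_prod k (map2 (mps_pow k) gs d)"

lemma mps_monom_Nil[simp]: "mps_monom k [] d = mps_one k" "mps_monom k gs [] = mps_one k"
  by (simp_all add: mps_monom_def)
lemma mps_monom_Cons[simp]: "mps_monom k (g#gs) (x#d) = mps_mult k (mps_pow k g x) (mps_monom k gs d)"
  by (simp add: mps_monom_def)
lemma mps_monom_in[simp]: "mps_monom k gs d \<in> mps k" by (simp add: mps_monom_def)

lemma mps_monom_ord: "length d = length gs \<Longrightarrow> \<forall>g\<in>set gs. ord_ge 1 g \<Longrightarrow> ord_ge (sum_list d) (mps_monom k gs d)"
proof (induction gs arbitrary: d)
  case Nil then show ?case by simp
next
  case (Cons g gs)
  then obtain x d' where d: "d = x # d'" "length d' = length gs" by (cases d) auto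
  then show ?case using Cons mps_mult_ord[of x "mps_pow k g x" "sum_list d'" "mps_monom k gs d'"] mps_pow_ord[of g x k]
    by simp
qed

lemma mps_monom_zeros: "mps_monom k gs (replicate n 0) = mps_one k"
proof (induction gs arbitrary: n)
  case Nil then show ?case by simp
next
  case (Cons g gs) then show ?case by (cases n) (simp_all add: mps_mult_one_left)
qed

lemma mps_mult_swap4: "mps_mult k (mps_mult k a b) (mps_mult k c d) = mps_mult k (mps_mult k a c) (mps_mult k b d)"
proof -
  have "mps_mult k (mps_mult k a b) (mps_mult k c d) = mps_mult k a (mps_mult k (mps_mult k b c) d)"
    by (simp only: mps_mult_assoc)
  also have "mps_mult k b c = mps_mult k c b" by (rule mps_mult_comm)
  also have "mps_mult k a (mps_mult k (mps_mult k c b) d) = mps_mult k (mps_mult k a c) (mps_mult k b d)"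
    by (simp only: mps_mult_assoc)
  finally show ?thesis .
qed

lemma mps_monom_exp_add: "length a = length gs \<Longrightarrow> length b = length gs \<Longrightarrow> mps_monom k gs (exp_add a b) = mps_mult k (mps_monom k gs a) (mps_monom k gs b)"
proof (induction gs arbitrary: a b)
  case Nil then show ?case by (simp add: mps_mult_one_left)
next
  case (Cons g gs)
  then obtain x a' y b' where ab: "a = x # a'" "b = y # b'" "length a' = length gs" "length b' = length gs"
    by (cases a; cases b) auto
  then show ?case using Cons by (simp add: mps_pow_add) (rule mps_mult_swap4)
qed

lemma mps_monom_unit: "i < length gs \<Longrightarrow> gs ! i \<in> mps k \<Longrightarrow> mps_monom k gs ((replicate (length gs) 0)[i := 1]) = gs ! i"
proof (induction gs arbitrary: i)
  case Nil then show ?case by simp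
next
  case (Cons g gs)
  show ?case
  proof (cases i)
    case 0
    then have "mps_monom k (g # gs) ((replicate (length (g # gs)) 0)[i := 1]) = mps_mult k (mps_pow k g 1) (mps_one k)"
      by (simp add: mps_monom_zeros)
    also have "\<dots> = g" using Cons.prems 0 by (simp add: mps_mult_one_right mps_pow_Suc mps_mult_in_mps)
    finally show ?thesis using 0 by simp
  next
    case (Suc j)
    then show ?thesis using Cons by (simp add: mps_mult_one_left)
  qed
qed

section \<open>Composition\<close>

definition bounded_exps :: "nat \<Rightarrow> nat \<Rightarrow> nat list set" where
  "bounded_exps m N = {d. length d = m \<and> sum_list d \<le> N}"

lemma finite_bounded_exps[simp]: "finite (bounded_exps m N)"
  by (simp add: bounded_exps_def finite_length_sum_list_le)

lemma mps_comp_monom: "mps_comp k f gs = (\<lambda>e. if length e = k then (\<Sum>d\<in>bounded_exps (length gs) (sum_list e). f d * mps_monom k gs d e) else 0)"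
  unfolding mps_comp_def bounded_exps_def mps_monom_def by (rule refl)

lemma mps_comp_range:
  assumes "length e = k" "\<forall>g\<in>set gs. ord_ge 1 g" "sum_list e \<le> N"
  shows "mps_comp k f gs e = (\<Sum>d\<in>bounded_exps (length gs) N. f d * mps_monom k gs d e)"
proof -
  have "mps_comp k f gs e = (\<Sum>d\<in>bounded_exps (length gs) (sum_list e). f d * mps_monom k gs d e)"
    using assms by (simp add: mps_comp_monom)
  also have "\<dots> = (\<Sum>d\<in>bounded_exps (length gs) N. f d * mps_monom k gs d e)"
  proof (rule sum.mono_neutral_left)
    show "bounded_exps (length gs) (sum_list e) \<subseteq> bounded_exps (length gs) N" using assms by (auto simp: bounded_exps_def)
    show "\<forall>i\<in>bounded_exps (length gs) N - bounded_exps (length gs) (sum_list e). f i * mps_monom k gs i e = 0"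
    proof
      fix d assume "d \<in> bounded_exps (length gs) N - bounded_exps (length gs) (sum_list e)"
      then have "length d = length gs" "sum_list e < sum_list d" by (auto simp: bounded_exps_def)
      then have "mps_monom k gs d e = 0" using mps_monom_ord[of d gs k] assms(2) by (simp add: ord_ge_def)
      then show "f d * mps_monom k gs d e = 0" by simp
    qed
  qed simp
  finally show ?thesis .
qed

lemma mps_comp_out: "length e \<noteq> k \<Longrightarrow> mps_comp k f gs e = 0"
  by (simp add: mps_comp_def)

lemma mps_comp_in_mps[simp]: "mps_comp k f gs \<in> mps k"
  by (simp add: mps_def mps_comp_def)

lemma bounded_exps_0: "bounded_exps m 0 = {replicate m 0}"
  by (auto simp: bounded_exps_def sum_list_zero_iff replicate_length_same)

lemma mps_one_zeros[simp]: "mps_one k (replicate k 0) = 1"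
  by (simp add: mps_one_def)

lemma mps_comp_const:
  assumes "\<forall>g\<in>set gs. ord_ge 1 g"
  shows "mps_comp k f gs (replicate k 0) = f (replicate (length gs) 0)"
  using mps_comp_range[of "replicate k 0" k gs 0 f] assms by (simp add: bounded_exps_0 mps_monom_zeros)

lemma mps_comp_cochain:
  assumes "\<forall>g\<in>set gs. ord_ge 1 g" "f (replicate (length gs) 0) = 0"
  shows "mps_comp k f gs \<in> cochains k"
  using mps_comp_const[OF assms(1), of k f] assms(2) by (simp add: cochains_def)

lemma sum_exp_splits_Sigma:
  "(\<Sum>d\<in>bounded_exps k N. \<Sum>(a,b)\<in>exp_splits d. F a b)
   = (\<Sum>(a,b)\<in>{(a,b). length a = k \<and> length b = k \<and> sum_list a + sum_list b \<le> N}. F a b)"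
proof -
  have "(\<Sum>d\<in>bounded_exps k N. \<Sum>(a,b)\<in>exp_splits d. F a b) = (\<Sum>(d,ab)\<in>(SIGMA d:bounded_exps k N. exp_splits d). (case ab of (a,b) \<Rightarrow> F a b))"
    by (rule sum.Sigma) simp_all
  also have "\<dots> = (\<Sum>(a,b)\<in>{(a,b). length a = k \<and> length b = k \<and> sum_list a + sum_list b \<le> N}. F a b)"
  proof (rule sum.reindex_bij_witness[where i="\<lambda>(a,b). (exp_add a b, (a,b))" and j="\<lambda>(d,ab). ab"])
    fix p assume p: "p \<in> (SIGMA d:bounded_exps k N. exp_splits d)"
    obtain d a b where pp: "p = (d,(a,b))" by (cases p) auto
    with p have l: "length d = k" "sum_list d \<le> N" "length a = length d" "length b = length d" "exp_add a b = d"
      by (auto simp: bounded_exps_def exp_splits_def)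
    show "(case case p of (d, ab) \<Rightarrow> ab of (a, b) \<Rightarrow> (exp_add a b, a, b)) = p" using pp l by simp
    show "(case p of (d, ab) \<Rightarrow> ab) \<in> {(a, b). length a = k \<and> length b = k \<and> sum_list a + sum_list b \<le> N}"
      using pp l sum_list_exp_add[of a b] by simp
    show "(case case p of (d, ab) \<Rightarrow> ab of (a, b) \<Rightarrow> F a b) = (case p of (d, ab) \<Rightarrow> case ab of (a, b) \<Rightarrow> F a b)"
      using pp by simp
  next
    fix q assume q: "q \<in> {(a, b). length a = k \<and> length b = k \<and> sum_list a + sum_list b \<le> N}"
    obtain a b where qq: "q = (a,b)" by (cases q) auto
    with q have l: "length a = k" "length b = k" "sum_list a + sum_list b \<le> N" by auto
    show "(case case q of (a, b) \<Rightarrow> (exp_add a b, a, b) of (d, ab) \<Rightarrow> ab) = q" using qq by simp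
    show "(case q of (a, b) \<Rightarrow> (exp_add a b, a, b)) \<in> (SIGMA d:bounded_exps k N. exp_splits d)"
      using qq l sum_list_exp_add[of a b] by (simp add: bounded_exps_def exp_splits_def)
  qed
  finally show ?thesis .
qed

text \<open>Substituting into a product: the monomial of a sum of exponents is the product of monomials,
  and only pairs of exponents of total degree at most N contribute.\<close>

lemma sum_mult_monom:
  fixes j :: nat
  assumes hs: "length hs = k" "\<forall>h\<in>set hs. ord_ge 1 h" and e: "sum_list e \<le> N"
  defines "Q \<equiv> mps_monom j hs"
  shows "(\<Sum>d\<in>bounded_exps k N. mps_mult k f g d * Q d e)
       = (\<Sum>(a,b)\<in>bounded_exps k N \<times> bounded_exps k N. f a * g b * mps_mult j (Q a) (Q b) e)"
proof -
  define PB where "PB = {(a,b). length a = k \<and> length b = k \<and> sum_list a + sum_list b \<le> N}"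
  let ?B = "bounded_exps k N"
  have "(\<Sum>d\<in>?B. mps_mult k f g d * Q d e) = (\<Sum>d\<in>?B. \<Sum>(a,b)\<in>exp_splits d. f a * g b * mps_mult j (Q a) (Q b) e)"
  proof (rule sum.cong[OF refl])
    fix d assume "d \<in> ?B"
    then have ld: "length d = k" by (simp add: bounded_exps_def)
    have "mps_mult k f g d * Q d e = (\<Sum>(a,b)\<in>exp_splits d. f a * g b * Q d e)"
      using ld by (simp add: mps_mult_exp_splits sum_distrib_right case_prod_beta)
    also have "\<dots> = (\<Sum>(a,b)\<in>exp_splits d. f a * g b * mps_mult j (Q a) (Q b) e)"
    proof (rule sum.cong[OF refl])
      fix p assume "p \<in> exp_splits d"
      then obtain a b where p: "p = (a,b)" "length a = k" "length b = k" "exp_add a b = d"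
        using ld by (cases p) (auto simp: exp_splits_def)
      then have "Q d = mps_mult j (Q a) (Q b)" using mps_monom_exp_add[of a hs b j] hs by (simp add: Q_def)
      then show "(case p of (a, b) \<Rightarrow> f a * g b * Q d e) = (case p of (a, b) \<Rightarrow> f a * g b * mps_mult j (Q a) (Q b) e)"
        using p by simp
    qed
    finally show "mps_mult k f g d * Q d e = (\<Sum>(a,b)\<in>exp_splits d. f a * g b * mps_mult j (Q a) (Q b) e)" .
  qed
  also have "\<dots> = (\<Sum>(a,b)\<in>PB. f a * g b * mps_mult j (Q a) (Q b) e)"
    unfolding PB_def by (rule sum_exp_splits_Sigma)
  also have "\<dots> = (\<Sum>(a,b)\<in>?B \<times> ?B. f a * g b * mps_mult j (Q a) (Q b) e)"
  proof (rule sum.mono_neutral_left)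
    show "PB \<subseteq> ?B \<times> ?B" by (auto simp: PB_def bounded_exps_def)
    show "\<forall>x\<in>?B \<times> ?B - PB. (case x of (a, b) \<Rightarrow> f a * g b * mps_mult j (Q a) (Q b) e) = 0"
    proof
      fix x assume x: "x \<in> ?B \<times> ?B - PB"
      obtain a b where ab: "x = (a,b)" by (cases x) auto
      with x have l: "length a = k" "length b = k" "N < sum_list a + sum_list b"
        by (auto simp: PB_def bounded_exps_def)
      have "ord_ge (sum_list a + sum_list b) (mps_mult j (Q a) (Q b))"
        using mps_mult_ord[OF mps_monom_ord[of a hs j] mps_monom_ord[of b hs j], of j] l hs by (simp add: Q_def)
      then show "(case x of (a, b) \<Rightarrow> f a * g b * mps_mult j (Q a) (Q b) e) = 0"
        using l e ab by (simp add: ord_ge_def)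
    qed
  qed simp
  finally show ?thesis .
qed

lemma mps_comp_mult:
  assumes hs: "length hs = k" "\<forall>h\<in>set hs. ord_ge 1 h"
  shows "mps_comp j (mps_mult k f g) hs = mps_mult j (mps_comp j f hs) (mps_comp j g hs)"
proof (rule ext)
  fix e
  show "mps_comp j (mps_mult k f g) hs e = mps_mult j (mps_comp j f hs) (mps_comp j g hs) e"
  proof (cases "length e = j")
    case False then show ?thesis by (simp add: mps_comp_out mps_mult_out)
  next
    case True
    define N where "N = sum_list e"
    define Q where "Q = mps_monom j hs"
    let ?B = "bounded_exps k N"
    have "mps_comp j (mps_mult k f g) hs e = (\<Sum>d\<in>?B. mps_mult k f g d * Q d e)"
      using mps_comp_range[of e j hs N] True hs by (simp add: N_def Q_def)
    also have "\<dots> = (\<Sum>a\<in>?B. \<Sum>b\<in>?B. f a * g b * mps_mult j (Q a) (Q b) e)"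
      using sum_mult_monom[OF hs, of e N] by (simp add: N_def Q_def sum.cartesian_product)
    also have "\<dots> = (\<Sum>a\<in>?B. \<Sum>b\<in>?B. \<Sum>(e1,e2)\<in>exp_splits e. (f a * Q a e1) * (g b * Q b e2))"
      using True by (simp add: mps_mult_exp_splits sum_distrib_left case_prod_beta mult_ac)
    also have "\<dots> = (\<Sum>(e1,e2)\<in>exp_splits e. (\<Sum>a\<in>?B. f a * Q a e1) * (\<Sum>b\<in>?B. g b * Q b e2))"
      by (simp add: sum_product sum.swap[of _ _ "exp_splits e"] case_prod_beta)
    also have "\<dots> = (\<Sum>(e1,e2)\<in>exp_splits e. mps_comp j f hs e1 * mps_comp j g hs e2)"
    proof (rule sum.cong[OF refl])
      fix p assume "p \<in> exp_splits e"
      then obtain e1 e2 where p: "p = (e1,e2)" "length e1 = j" "length e2 = j" "exp_add e1 e2 = e"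
        using True by (cases p) (auto simp: exp_splits_def)
      then have s: "sum_list e1 \<le> N" "sum_list e2 \<le> N" using sum_list_exp_add[of e1 e2] by (auto simp: N_def)
      show "(case p of (e1, e2) \<Rightarrow> (\<Sum>a\<in>?B. f a * Q a e1) * (\<Sum>b\<in>?B. g b * Q b e2)) =
            (case p of (e1, e2) \<Rightarrow> mps_comp j f hs e1 * mps_comp j g hs e2)"
        using p s mps_comp_range[of e1 j hs N f] mps_comp_range[of e2 j hs N g] hs by (simp add: Q_def)
    qed
    also have "\<dots> = mps_mult j (mps_comp j f hs) (mps_comp j g hs) e"
      using True by (simp add: mps_mult_exp_splits)
    finally show ?thesis .
  qed
qed

lemma mps_one_out: "length e \<noteq> k \<Longrightarrow> mps_one k e = 0"
  by (auto simp: mps_one_def)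

lemma sum_list_zeros[simp]: "sum_list (replicate k (0::nat)) = 0"
  by (induction k) auto

lemma zeros_in_bounded_exps[simp]: "replicate k 0 \<in> bounded_exps k N"
  by (simp add: bounded_exps_def)

lemma mps_comp_one:
  assumes hs: "length hs = k" "\<forall>h\<in>set hs. ord_ge 1 h"
  shows "mps_comp j (mps_one k) hs = mps_one j"
proof (rule ext)
  fix e show "mps_comp j (mps_one k) hs e = mps_one j e"
  proof (cases "length e = j")
    case False then show ?thesis by (simp add: mps_comp_out mps_one_out)
  next
    case True
    have "mps_comp j (mps_one k) hs e = (\<Sum>d\<in>bounded_exps k (sum_list e). mps_one k d * mps_monom j hs d e)"
      using mps_comp_range[of e j hs "sum_list e"] True hs by simp
    also have "\<dots> = (\<Sum>d\<in>bounded_exps k (sum_list e). if d = replicate k 0 then mps_monom j hs d e else 0)"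
      by (rule sum.cong[OF refl]) (simp add: mps_one_def)
    also have "\<dots> = mps_monom j hs (replicate k 0) e" by simp
    also have "\<dots> = mps_one j e" by (simp add: mps_monom_zeros)
    finally show ?thesis .
  qed
qed

lemma mps_comp_cochain_ord:
  assumes "\<forall>h\<in>set hs. ord_ge 1 h" "ord_ge 1 g"
  shows "ord_ge 1 (mps_comp j g hs)"
proof -
  have "g (replicate (length hs) 0) = 0" using assms(2) by (simp add: ord_ge_def)
  then show ?thesis using mps_comp_cochain[OF assms(1)] cochain_ord by blast
qed

lemma mps_comp_pow:
  assumes hs: "length hs = k" "\<forall>h\<in>set hs. ord_ge 1 h"
  shows "mps_comp j (mps_pow k g n) hs = mps_pow j (mps_comp j g hs) n"
proof (induction n)
  case 0 then show ?case using mps_comp_one[OF hs] by simp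
next
  case (Suc n) then show ?case using mps_comp_mult[OF hs] by (simp add: mps_pow_Suc)
qed

lemma mps_comp_of_monom:
  assumes hs: "length hs = k" "\<forall>h\<in>set hs. ord_ge 1 h"
  shows "length c = length gs \<Longrightarrow> mps_comp j (mps_monom k gs c) hs = mps_monom j (map (\<lambda>g. mps_comp j g hs) gs) c"
proof (induction gs arbitrary: c)
  case Nil then show ?case using mps_comp_one[OF hs] by simp
next
  case (Cons g gs)
  then obtain x c' where c: "c = x # c'" "length c' = length gs" by (cases c) auto
  then show ?case using Cons mps_comp_mult[OF hs] mps_comp_pow[OF hs] by simp
qed

lemma mps_comp_assoc:
  assumes hs: "length hs = k" "\<forall>h\<in>set hs. ord_ge 1 h" and gs: "\<forall>g\<in>set gs. ord_ge 1 g"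
  shows "mps_comp j (mps_comp k f gs) hs = mps_comp j f (map (\<lambda>g. mps_comp j g hs) gs)"
proof (rule ext)
  fix e show "mps_comp j (mps_comp k f gs) hs e = mps_comp j f (map (\<lambda>g. mps_comp j g hs) gs) e"
  proof (cases "length e = j")
    case False then show ?thesis by (simp add: mps_comp_out)
  next
    case True
    define N where "N = sum_list e"
    let ?gs' = "map (\<lambda>g. mps_comp j g hs) gs"
    have gs': "\<forall>g\<in>set ?gs'. ord_ge 1 g" using gs mps_comp_cochain_ord[OF hs(2)] by auto
    have "mps_comp j (mps_comp k f gs) hs e = (\<Sum>d\<in>bounded_exps k N. mps_comp k f gs d * mps_monom j hs d e)"
      using mps_comp_range[of e j hs N] True hs by (simp add: N_def)
    also have "\<dots> = (\<Sum>d\<in>bounded_exps k N. (\<Sum>c\<in>bounded_exps (length gs) N. f c * mps_monom k gs c d) * mps_monom j hs d e)"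
    proof (rule sum.cong[OF refl])
      fix d assume "d \<in> bounded_exps k N"
      then have "length d = k" "sum_list d \<le> N" by (auto simp: bounded_exps_def)
      then show "mps_comp k f gs d * mps_monom j hs d e = (\<Sum>c\<in>bounded_exps (length gs) N. f c * mps_monom k gs c d) * mps_monom j hs d e"
        using mps_comp_range[of d k gs N f] gs by simp
    qed
    also have "\<dots> = (\<Sum>c\<in>bounded_exps (length gs) N. f c * (\<Sum>d\<in>bounded_exps k N. mps_monom k gs c d * mps_monom j hs d e))"
      by (simp add: sum_distrib_left sum_distrib_right sum.swap[of _ "bounded_exps k N"] mult.assoc)
    also have "\<dots> = (\<Sum>c\<in>bounded_exps (length gs) N. f c * mps_comp j (mps_monom k gs c) hs e)"
    proof (rule sum.cong[OF refl])
      fix c assume "c \<in> bounded_exps (length gs) N"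
      show "f c * (\<Sum>d\<in>bounded_exps k N. mps_monom k gs c d * mps_monom j hs d e) = f c * mps_comp j (mps_monom k gs c) hs e"
        using mps_comp_range[of e j hs N "mps_monom k gs c"] True hs by (simp add: N_def)
    qed
    also have "\<dots> = (\<Sum>c\<in>bounded_exps (length gs) N. f c * mps_monom j ?gs' c e)"
    proof (rule sum.cong[OF refl])
      fix c assume "c \<in> bounded_exps (length gs) N"
      then have "length c = length gs" by (simp add: bounded_exps_def)
      then show "f c * mps_comp j (mps_monom k gs c) hs e = f c * mps_monom j ?gs' c e"
        using mps_comp_of_monom[OF hs] by simp
    qed
    also have "\<dots> = mps_comp j f ?gs' e"
      using mps_comp_range[of e j ?gs' N f] True gs' by (simp add: N_def)
    finally show ?thesis .
  qed
qed

lemma sum_list_unit: "i < k \<Longrightarrow> sum_list ((replicate k (0::nat))[i := 1]) = 1"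
proof (induction k arbitrary: i)
  case 0 then show ?case by simp
next
  case (Suc k) then show ?case by (cases i) (simp_all add: sum_list_zero_iff)
qed

lemma mps_comp_var:
  assumes hs: "length hs = k" "\<forall>h\<in>set hs. ord_ge 1 h" and i: "i < k" and hi: "hs ! i \<in> mps j"
  shows "mps_comp j (mps_var k i) hs = hs ! i"
proof (rule ext)
  fix e show "mps_comp j (mps_var k i) hs e = (hs ! i) e"
  proof (cases "length e = j")
    case False then show ?thesis using hi by (simp add: mps_comp_out mps_def)
  next
    case True
    let ?u = "(replicate k 0)[i := 1]"
    have u: "?u \<in> bounded_exps k (sum_list e + 1)" using i sum_list_unit[of i k] by (simp add: bounded_exps_def)
    have "mps_comp j (mps_var k i) hs e = (\<Sum>d\<in>bounded_exps k (sum_list e + 1). mps_var k i d * mps_monom j hs d e)"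
      using mps_comp_range[of e j hs "sum_list e + 1"] True hs by simp
    also have "\<dots> = (\<Sum>d\<in>bounded_exps k (sum_list e + 1). if d = ?u then mps_monom j hs d e else 0)"
      by (rule sum.cong[OF refl]) (simp add: mps_var_def)
    also have "\<dots> = mps_monom j hs ?u e" using u by simp
    also have "\<dots> = (hs ! i) e" using mps_monom_unit[of i hs j] hs i hi by simp
    finally show ?thesis .
  qed
qed

lemma mps_zero_in[simp]: "mps_zero \<in> mps k" by (simp add: mps_def mps_zero_def)

lemma ord_zero[simp]: "ord_ge p mps_zero" by (simp add: ord_ge_def mps_zero_def)

lemma mps_comp_zero_left[simp]: "mps_comp j mps_zero hs = mps_zero"
  by (rule ext) (simp add: mps_comp_def mps_zero_def)

lemma mps_comp_add_left: "mps_comp j (mps_add f g) hs = mps_add (mps_comp j f hs) (mps_comp j g hs)"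
  by (rule ext) (simp add: mps_comp_def mps_add_def distrib_right sum.distrib)

lemma is_ring_hom_0: "is_ring_hom \<psi> \<Longrightarrow> \<psi> 0 = 0"
  by (metis add_cancel_right_right is_ring_hom_def)

lemma is_ring_hom_add: "is_ring_hom \<psi> \<Longrightarrow> \<psi> (x + y) = \<psi> x + \<psi> y"
  by (simp add: is_ring_hom_def)

lemma is_ring_hom_mult: "is_ring_hom \<psi> \<Longrightarrow> \<psi> (x * y) = \<psi> x * \<psi> y"
  by (simp add: is_ring_hom_def)

lemma is_ring_hom_1: "is_ring_hom \<psi> \<Longrightarrow> \<psi> 1 = 1"
  by (simp add: is_ring_hom_def)

lemma is_ring_hom_sum: "is_ring_hom \<psi> \<Longrightarrow> \<psi> (sum F A) = (\<Sum>a\<in>A. \<psi> (F a))"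
proof (induction A rule: infinite_finite_induct)
  case (infinite A) then show ?case by (simp add: is_ring_hom_0)
next
  case empty then show ?case by (simp add: is_ring_hom_0)
next
  case (insert x F) then show ?case by (simp add: is_ring_hom_add)
qed

lemma is_ring_hom_comp: "is_ring_hom \<psi> \<Longrightarrow> is_ring_hom \<phi> \<Longrightarrow> is_ring_hom (\<psi> \<circ> \<phi>)"
  by (simp add: is_ring_hom_def)

lemma mps_map_mult: "is_ring_hom \<psi> \<Longrightarrow> mps_map \<psi> (mps_mult k f g) = mps_mult k (mps_map \<psi> f) (mps_map \<psi> g)"
  by (rule ext) (simp add: mps_map_def mps_mult_def is_ring_hom_sum is_ring_hom_mult is_ring_hom_0)

lemma mps_map_one: "is_ring_hom \<psi> \<Longrightarrow> mps_map \<psi> (mps_one k) = mps_one k"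
  by (rule ext) (simp add: mps_map_def mps_one_def is_ring_hom_0 is_ring_hom_1)

lemma mps_map_var: "is_ring_hom \<psi> \<Longrightarrow> mps_map \<psi> (mps_var k i) = mps_var k i"
  by (rule ext) (simp add: mps_map_def mps_var_def is_ring_hom_0 is_ring_hom_1)

lemma mps_map_zero: "is_ring_hom \<psi> \<Longrightarrow> mps_map \<psi> mps_zero = mps_zero"
  by (rule ext) (simp add: mps_map_def mps_zero_def is_ring_hom_0)

lemma mps_map_add: "is_ring_hom \<psi> \<Longrightarrow> mps_map \<psi> (mps_add f g) = mps_add (mps_map \<psi> f) (mps_map \<psi> g)"
  by (rule ext) (simp add: mps_map_def mps_add_def is_ring_hom_add)

lemma mps_map_pow: "is_ring_hom \<psi> \<Longrightarrow> mps_map \<psi> (mps_pow k f n) = mps_pow k (mps_map \<psi> f) n"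
  by (induction n) (simp_all add: mps_map_one mps_pow_Suc mps_map_mult)

lemma mps_map_monom: "is_ring_hom \<psi> \<Longrightarrow> mps_map \<psi> (mps_monom k gs d) = mps_monom k (map (mps_map \<psi>) gs) d"
proof (induction gs arbitrary: d)
  case Nil then show ?case by (simp add: mps_map_one)
next
  case (Cons g gs) then show ?case by (cases d) (simp_all add: mps_map_one mps_map_mult mps_map_pow)
qed

lemma mps_map_comp: "is_ring_hom \<psi> \<Longrightarrow> mps_map \<psi> (mps_comp k f gs) = mps_comp k (mps_map \<psi> f) (map (mps_map \<psi>) gs)"
proof (rule ext)
  fix e assume h: "is_ring_hom \<psi>"
  have "\<psi> (mps_monom k gs d e) = mps_monom k (map (mps_map \<psi>) gs) d e" for d
    using mps_map_monom[OF h, of k gs d] by (metis mps_map_def)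
  then show "mps_map \<psi> (mps_comp k f gs) e = mps_comp k (mps_map \<psi> f) (map (mps_map \<psi>) gs) e"
    using h by (simp add: mps_comp_monom mps_map_def is_ring_hom_sum is_ring_hom_mult is_ring_hom_0)
qed

lemma mps_map_mps: "is_ring_hom \<psi> \<Longrightarrow> f \<in> mps k \<Longrightarrow> mps_map \<psi> f \<in> mps k"
  by (simp add: mps_def mps_map_def is_ring_hom_0)

lemma mps_map_cochains: "is_ring_hom \<psi> \<Longrightarrow> f \<in> cochains k \<Longrightarrow> mps_map \<psi> f \<in> cochains k"
  by (simp add: cochains_def mps_def mps_map_def is_ring_hom_0)

lemma mps_map_map: "mps_map \<psi> (mps_map \<phi> f) = mps_map (\<psi> \<circ> \<phi>) f"
  by (simp add: mps_map_def comp_def)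

lemma fgl_map: assumes h: "is_ring_hom \<psi>" and F: "fgl F" shows "fgl (mps_map \<psi> F)"
proof -
  have "mps_map \<psi> F \<in> mps 2" using F h mps_map_mps by (auto simp: fgl_def)
  moreover have "mps_comp 1 (mps_map \<psi> F) [mps_var 1 0, mps_zero] = mps_var 1 0"
    using arg_cong[where f="mps_map \<psi>", OF conjunct1[OF conjunct2[OF F[unfolded fgl_def]]]]
    by (simp add: mps_map_comp[OF h] mps_map_var[OF h] mps_map_zero[OF h])
  moreover have "mps_comp 1 (mps_map \<psi> F) [mps_zero, mps_var 1 0] = mps_var 1 0"
    using arg_cong[where f="mps_map \<psi>", OF conjunct1[OF conjunct2[OF conjunct2[OF F[unfolded fgl_def]]]]]
    by (simp add: mps_map_comp[OF h] mps_map_var[OF h] mps_map_zero[OF h])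
  moreover have "mps_comp 2 (mps_map \<psi> F) [mps_var 2 1, mps_var 2 0] = mps_map \<psi> F"
    using arg_cong[where f="mps_map \<psi>", OF conjunct1[OF conjunct2[OF conjunct2[OF conjunct2[OF F[unfolded fgl_def]]]]]]
    by (simp add: mps_map_comp[OF h] mps_map_var[OF h])
  moreover have "mps_comp 3 (mps_map \<psi> F) [mps_comp 3 (mps_map \<psi> F) [mps_var 3 0, mps_var 3 1], mps_var 3 2]
       = mps_comp 3 (mps_map \<psi> F) [mps_var 3 0, mps_comp 3 (mps_map \<psi> F) [mps_var 3 1, mps_var 3 2]]"
    using arg_cong[where f="mps_map \<psi>", OF conjunct2[OF conjunct2[OF conjunct2[OF conjunct2[OF F[unfolded fgl_def]]]]]]
    by (simp add: mps_map_comp[OF h] mps_map_var[OF h])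
  ultimately show ?thesis by (simp add: fgl_def)
qed

declare One_nat_def [simp del]

lemma var_in_mps[simp]: "mps_var k i \<in> mps k"
  by (simp add: mps_def mps_var_def)

lemma unit_ne_zeros: "i < k \<Longrightarrow> (replicate k (0::nat))[i := 1] \<noteq> replicate k 0"
proof
  assume i: "i < k" and eq: "(replicate k (0::nat))[i := 1] = replicate k 0"
  have "(replicate k (0::nat))[i := 1] ! i = replicate k 0 ! i" using eq by simp
  then show False using i by simp
qed

lemma var_cochain: assumes i: "i < k" shows "mps_var k i \<in> cochains k"
proof -
  have ne: "replicate k (0::nat) \<noteq> (replicate k 0)[i := 1]" using unit_ne_zeros[OF i] by (rule not_sym)
  have "mps_var k i (replicate k 0) = 0" unfolding mps_var_def using ne by (simp only: if_False)
  then show ?thesis by (simp add: cochains_def)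
qed

lemma var_ord: "i < k \<Longrightarrow> ord_ge 1 (mps_var k i :: ('a::comm_ring_1) mps)"
  by (erule var_cochain[THEN cochain_ord])

lemma zero_cochain[simp]: "mps_zero \<in> cochains k"
  by (simp add: cochains_def mps_zero_def mps_def)

lemma cochain_mps: "f \<in> cochains k \<Longrightarrow> f \<in> mps k"
  by (simp add: cochains_def)

lemma mps_comp_assoc2:
  assumes "length hs = k" "\<forall>h\<in>set hs. ord_ge 1 h" "ord_ge 1 g1" "ord_ge 1 g2"
  shows "mps_comp j (mps_comp k f [g1,g2]) hs = mps_comp j f [mps_comp j g1 hs, mps_comp j g2 hs]"
proof -
  have "\<forall>g\<in>set [g1,g2]. ord_ge 1 g" using assms by simp
  from mps_comp_assoc[OF assms(1,2) this] show ?thesis by simp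
qed

lemma ord_mps_comp2:
  assumes "ord_ge 1 g1" "ord_ge 1 g2" "f [0,0] = 0"
  shows "ord_ge 1 (mps_comp k f [g1,g2])"
proof -
  have "\<forall>g\<in>set [g1,g2]. ord_ge 1 g" using assms by simp
  moreover have "f (replicate (length [g1,g2]) 0) = 0" using assms(3) by (simp add: numeral_2_eq_2)
  ultimately have "mps_comp k f [g1,g2] \<in> cochains k" by (rule mps_comp_cochain)
  then show ?thesis by (rule cochain_ord)
qed

locale fgl_group =
  fixes G :: "('a::comm_ring_1) mps"
  assumes fgl: "fgl G"
begin

lemma G_mps: "G \<in> mps 2" using fgl by (simp add: fgl_def)

lemma G_r0: "mps_comp 1 G [mps_var 1 0, mps_zero] = mps_var 1 0" using fgl by (simp add: fgl_def)
lemma G_l0: "mps_comp 1 G [mps_zero, mps_var 1 0] = mps_var 1 0" using fgl by (simp add: fgl_def)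
lemma G_comm: "mps_comp 2 G [mps_var 2 1, mps_var 2 0] = G" using fgl by (simp add: fgl_def)
lemma G_assoc: "mps_comp 3 G [mps_comp 3 G [mps_var 3 0, mps_var 3 1], mps_var 3 2]
       = mps_comp 3 G [mps_var 3 0, mps_comp 3 G [mps_var 3 1, mps_var 3 2]]" using fgl by (simp add: fgl_def)

lemma G_const: "G [0,0] = 0"
proof -
  have "mps_comp 1 G [mps_var 1 0, mps_zero] [0] = G (replicate 2 0)"
    using mps_comp_const[of "[mps_var 1 0, mps_zero]" 1 G] var_ord[of 0 1] by (simp add: numeral_2_eq_2 One_nat_def)
  moreover have "mps_var 1 0 [0] = (0::'a)" by (simp add: mps_var_def One_nat_def)
  ultimately show ?thesis using G_r0 by (simp add: numeral_2_eq_2)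
qed

lemma cadd_closed: "f \<in> cochains n \<Longrightarrow> g \<in> cochains n \<Longrightarrow> cadd G n f g \<in> cochains n"
  unfolding cadd_def by (rule mps_comp_cochain) (auto intro: cochain_ord simp: G_const numeral_2_eq_2)

lemma mps_comp_X1: assumes "f \<in> cochains n" shows "mps_comp n (mps_var 1 0) [f] = f"
  using mps_comp_var[of "[f]" 1 0 n] assms cochain_ord cochain_mps by auto

lemma mps_comp_var_cochain: assumes "length hs = k" "\<forall>h\<in>set hs. ord_ge 1 h" "i < k" "hs ! i \<in> cochains n"
  shows "mps_comp n (mps_var k i) hs = hs ! i"
  using mps_comp_var[of hs k i n] assms cochain_mps by auto

lemma cadd_l0: assumes f: "f \<in> cochains n" shows "cadd G n mps_zero f = f"
proof -
  have "mps_comp n (mps_comp 1 G [mps_zero, mps_var 1 0]) [f] = mps_comp n G [mps_comp n mps_zero [f], mps_comp n (mps_var 1 0) [f]]"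
    by (rule mps_comp_assoc2) (simp_all add: cochain_ord[OF f] var_ord)
  then show ?thesis using G_l0 mps_comp_X1[OF f] by (simp add: cadd_def)
qed

lemma cadd_comm: assumes f: "f \<in> cochains n" and g: "g \<in> cochains n" shows "cadd G n f g = cadd G n g f"
proof -
  have o: "\<forall>h\<in>set [f,g]. ord_ge 1 h" using cochain_ord[OF f] cochain_ord[OF g] by simp
  have A: "mps_comp n (mps_comp 2 G [mps_var 2 1, mps_var 2 0]) [f,g] = mps_comp n G [mps_comp n (mps_var 2 1) [f,g], mps_comp n (mps_var 2 0) [f,g]]"
    by (rule mps_comp_assoc2) (simp_all add: o var_ord)
  have B: "mps_comp n (mps_var 2 1) [f,g] = g" using mps_comp_var_cochain[of "[f,g]" 2 1 n] o g by simp
  have C: "mps_comp n (mps_var 2 0) [f,g] = f" using mps_comp_var_cochain[of "[f,g]" 2 0 n] o f by simp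
  have "mps_comp n G [f,g] = mps_comp n (mps_comp 2 G [mps_var 2 1, mps_var 2 0]) [f,g]"
    by (simp only: G_comm)
  also have "\<dots> = mps_comp n G [g, f]" by (simp only: A B C)
  finally show ?thesis by (simp only: cadd_def)
qed

lemma cadd_assoc: assumes f: "f \<in> cochains n" and g: "g \<in> cochains n" and h: "h \<in> cochains n"
  shows "cadd G n (cadd G n f g) h = cadd G n f (cadd G n g h)"
proof -
  let ?hs = "[f,g,h]"
  have l: "length ?hs = 3" by simp
  have o: "\<forall>x\<in>set ?hs. ord_ge 1 x" using cochain_ord[OF f] cochain_ord[OF g] cochain_ord[OF h] by simp
  have v0: "mps_comp n (mps_var 3 0) ?hs = f" using mps_comp_var_cochain[OF l o, of 0 n] f by simp
  have v1: "mps_comp n (mps_var 3 1) ?hs = g" using mps_comp_var_cochain[OF l o, of 1 n] g by simp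
  have v2: "mps_comp n (mps_var 3 2) ?hs = h" using mps_comp_var_cochain[OF l o, of 2 n] h by simp
  have ov0: "ord_ge 1 (mps_var 3 0 :: 'a mps)" by (rule var_ord) simp
  have ov1: "ord_ge 1 (mps_var 3 1 :: 'a mps)" by (rule var_ord) simp
  have ov2: "ord_ge 1 (mps_var 3 2 :: 'a mps)" by (rule var_ord) simp
  have o01: "ord_ge 1 (mps_comp 3 G [mps_var 3 0, mps_var 3 1])"
    using ord_mps_comp2[of "mps_var 3 0" "mps_var 3 1" G 3, OF ov0 ov1 G_const] .
  have o12: "ord_ge 1 (mps_comp 3 G [mps_var 3 1, mps_var 3 2])"
    using ord_mps_comp2[of "mps_var 3 1" "mps_var 3 2" G 3, OF ov1 ov2 G_const] .
  have a01: "mps_comp n (mps_comp 3 G [mps_var 3 0, mps_var 3 1]) ?hs = cadd G n f g"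
    unfolding mps_comp_assoc2[OF l o ov0 ov1] v0 v1 cadd_def ..
  have a12: "mps_comp n (mps_comp 3 G [mps_var 3 1, mps_var 3 2]) ?hs = cadd G n g h"
    unfolding mps_comp_assoc2[OF l o ov1 ov2] v1 v2 cadd_def ..
  have L: "mps_comp n (mps_comp 3 G [mps_comp 3 G [mps_var 3 0, mps_var 3 1], mps_var 3 2]) ?hs = cadd G n (cadd G n f g) h"
    unfolding mps_comp_assoc2[OF l o o01 ov2] a01 v2 cadd_def ..
  have R: "mps_comp n (mps_comp 3 G [mps_var 3 0, mps_comp 3 G [mps_var 3 1, mps_var 3 2]]) ?hs = cadd G n f (cadd G n g h)"
    unfolding mps_comp_assoc2[OF l o ov0 o12] a12 v0 cadd_def ..
  have "cadd G n (cadd G n f g) h = mps_comp n (mps_comp 3 G [mps_comp 3 G [mps_var 3 0, mps_var 3 1], mps_var 3 2]) ?hs"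
    by (rule L[symmetric])
  also have "\<dots> = mps_comp n (mps_comp 3 G [mps_var 3 0, mps_comp 3 G [mps_var 3 1, mps_var 3 2]]) ?hs"
    by (simp only: G_assoc)
  also have "\<dots> = cadd G n f (cadd G n g h)" by (rule R)
  finally show ?thesis .
qed

end

section \<open>The formal inverse\<close>

definition agree :: "nat \<Rightarrow> ('a::comm_ring_1) mps \<Rightarrow> 'a mps \<Rightarrow> bool" where
  "agree m f g \<longleftrightarrow> (\<forall>e. sum_list e \<le> m \<longrightarrow> f e = g e)"

lemma agree_refl[simp]: "agree m f f" by (simp add: agree_def)
lemma agree_trans: "agree m f g \<Longrightarrow> agree m g h \<Longrightarrow> agree m f h" by (simp add: agree_def)
lemma agree_mono: "agree m f g \<Longrightarrow> m' \<le> m \<Longrightarrow> agree m' f g" by (simp add: agree_def)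

lemma agree_mult_ord:
  assumes f: "ord_ge p f" and g: "agree m g g'"
  shows "agree (m + p) (mps_mult k f g) (mps_mult k f g')"
  unfolding agree_def
proof (intro allI impI)
  fix e :: "nat list" assume e: "sum_list e \<le> m + p"
  show "mps_mult k f g e = mps_mult k f g' e"
  proof (cases "length e = k")
    case True
    have "(\<Sum>(a,b)\<in>exp_splits e. f a * g b) = (\<Sum>(a,b)\<in>exp_splits e. f a * g' b)"
    proof (rule sum.cong[OF refl])
      fix x assume "x \<in> exp_splits e"
      then obtain a b where x: "x = (a,b)" "length a = length e" "length b = length e" "exp_add a b = e"
        by (cases x) (auto simp: exp_splits_def)
      then have s: "sum_list a + sum_list b \<le> m + p" using e sum_list_exp_add[of a b] by simp
      show "(case x of (a, b) \<Rightarrow> f a * g b) = (case x of (a, b) \<Rightarrow> f a * g' b)"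
      proof (cases "sum_list a < p")
        case True then have "f a = 0" using f by (simp add: ord_ge_def)
        then show ?thesis using x by simp
      next
        case False then have "sum_list b \<le> m" using s by linarith
        then have "g b = g' b" using g by (simp add: agree_def)
        then show ?thesis using x by simp
      qed
    qed
    then show ?thesis using True by (simp add: mps_mult_exp_splits)
  qed (simp add: mps_mult_def)
qed

lemma agree_mult:
  assumes "agree m f f'" "agree m g g'"
  shows "agree m (mps_mult k f g) (mps_mult k f' g')"
proof -
  have "agree (m+0) (mps_mult k f g) (mps_mult k f g')" by (rule agree_mult_ord) (simp_all add: assms)
  moreover have "agree (m+0) (mps_mult k g' f) (mps_mult k g' f')" by (rule agree_mult_ord) (simp_all add: assms)
  ultimately show ?thesis using mps_mult_comm[of k g' f] mps_mult_comm[of k g' f'] agree_trans by fastforce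
qed

lemma agree_pow: "agree m f f' \<Longrightarrow> agree m (mps_pow k f n) (mps_pow k f' n)"
  by (induction n) (simp_all add: mps_pow_Suc agree_mult)

lemma agree_cochains0: "f \<in> cochains 1 \<Longrightarrow> g \<in> cochains 1 \<Longrightarrow> agree 0 f g"
  unfolding agree_def
proof (intro allI impI)
  fix e :: "nat list" assume f: "f \<in> cochains 1" and g: "g \<in> cochains 1" and e: "sum_list e \<le> 0"
  show "f e = g e"
  proof (cases "length e = 1")
    case True
    then have "e = replicate 1 0" using e sum_list_zero_iff by (metis le_zero_eq)
    then show ?thesis using f g by (simp add: cochains_def)
  next
    case False then show ?thesis using f g by (simp add: cochains_def mps_def)
  qed
qed

abbreviation X1 :: "('a::comm_ring_1) mps" where "X1 \<equiv> mps_var 1 0"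

lemma divisors_single: "[a] \<in> divisors_exp [b] \<longleftrightarrow> a \<le> b"
  by (simp add: divisors_exp_def)

lemma X1_shift: "mps_mult 1 X1 f [b] = (if b = 0 then 0 else f [b - 1])"
proof -
  have "mps_mult 1 X1 f [b] = (\<Sum>a\<in>divisors_exp [b]. X1 a * f (map2 (-) [b] a))"
    by (simp add: mps_mult_def)
  also have "\<dots> = (\<Sum>a\<in>divisors_exp [b]. if a = [1] then f (map2 (-) [b] a) else 0)"
    by (rule sum.cong[OF refl]) (simp add: mps_var_def One_nat_def)
  also have "\<dots> = (if [1] \<in> divisors_exp [b] then f (map2 (-) [b] [1]) else 0)"
    by (simp add: sum.delta[OF finite_divisors_exp])
  also have "\<dots> = (if b = 0 then 0 else f [b - 1])"
    by (simp add: divisors_single)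
  finally show ?thesis .
qed

lemma X1_pow: "mps_pow 1 (X1::'a::comm_ring_1 mps) m e = (if e = [m] then 1 else 0)"
proof (induction m arbitrary: e)
  case 0 then show ?case by (simp add: mps_one_def One_nat_def)
next
  case (Suc m)
  show ?case
  proof (cases "length e = 1")
    case False
    then have "mps_pow 1 (X1::'a mps) (Suc m) e = 0" by (rule mps_out[OF mps_pow_in])
    then show ?thesis using False by auto
  next
    case True
    then obtain b where b: "e = [b]" by (cases e) (auto simp: One_nat_def)
    then show ?thesis using Suc by (cases b) (simp_all add: mps_pow_Suc X1_shift)
  qed
qed

lemma mps_mult_zero_left[simp]: "mps_mult k mps_zero f = mps_zero"
  by (rule ext) (simp add: mps_mult_def mps_zero_def)

lemma mps_mult_zero_right[simp]: "mps_mult k f mps_zero = mps_zero"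
  by (subst mps_mult_comm) simp

lemma mps_pow_zero_Suc: "mps_pow k mps_zero (Suc m) = mps_zero"
  by (simp add: mps_pow_Suc)

lemma mps_monom_zero_X: "mps_monom 1 [mps_zero, X1] [a, b] c = (if a = 0 \<and> c = [b] then (1::'a::comm_ring_1) else 0)"
proof (cases a)
  case 0
  have "mps_monom 1 [mps_zero, X1] [a, b] = (mps_pow 1 (X1::'a mps) b)"
    using 0 by (simp add: mps_mult_one_left mps_mult_one_right)
  then show ?thesis using 0 X1_pow[of b c] by auto
next
  case (Suc a') then show ?thesis by (simp add: mps_pow_zero_Suc) (simp add: mps_zero_def)
qed

lemma mps_monom_X_zero: "mps_monom 1 [X1, mps_zero] [a, b] c = (if b = 0 \<and> c = [a] then (1::'a::comm_ring_1) else 0)"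
proof (cases b)
  case 0
  have "mps_monom 1 [X1, mps_zero] [a, b] = (mps_pow 1 (X1::'a mps) a)"
    using 0 by (simp add: mps_mult_one_left mps_mult_one_right)
  then show ?thesis using 0 X1_pow[of a c] by auto
next
  case (Suc b') then show ?thesis by (simp add: mps_pow_zero_Suc) (simp add: mps_zero_def)
qed

lemma bounded_exps_2: "d \<in> bounded_exps 2 N \<Longrightarrow> \<exists>x y. d = [x, y]"
  by (cases d; cases "tl d") (auto simp: bounded_exps_def numeral_2_eq_2)

text \<open>Since G(0,Y) = Y, we have G(X,Y) = Y + xpart G (X,Y), where xpart G collects the terms divisible
  by X. The inverse i thus solves i = - xpart G (X, i); the map i \<mapsto> - xpart G (X, i) raises the
  degree up to which two series agree by one, so its iterates starting from 0 converge X-adically.\<close>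

definition xpart :: "('a::comm_ring_1) mps \<Rightarrow> 'a mps" where
  "xpart G = (\<lambda>c. if hd c = 0 then 0 else G c)"

definition xpart_subst :: "('a::comm_ring_1) mps \<Rightarrow> 'a mps \<Rightarrow> 'a mps" where
  "xpart_subst G i = mps_comp 1 (xpart G) [X1, i]"

primrec inv_approx :: "('a::comm_ring_1) mps \<Rightarrow> nat \<Rightarrow> 'a mps" where
  "inv_approx G 0 = mps_zero"
| "inv_approx G (Suc m) = (\<lambda>e. - xpart_subst G (inv_approx G m) e)"

context fgl_group
begin

lemma X1_ord: "ord_ge 1 (X1::'a mps)" by (rule var_ord) simp

lemma G_coeff_0_b: "G [0, b] = (if b = 1 then 1 else 0)"
proof -
  have o: "\<forall>h\<in>set [mps_zero, X1::'a mps]. ord_ge 1 h" using X1_ord by simp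
  have "mps_comp 1 G [mps_zero, X1] [b] = (\<Sum>d\<in>bounded_exps 2 b. G d * mps_monom 1 [mps_zero, X1] d [b])"
    using mps_comp_range[of "[b]" 1 "[mps_zero, X1::'a mps]" b G] o by (simp add: One_nat_def numeral_2_eq_2)
  also have "\<dots> = (\<Sum>d\<in>bounded_exps 2 b. if d = [0, b] then G d else 0)"
  proof (rule sum.cong[OF refl])
    fix d assume "d \<in> bounded_exps 2 b"
    then obtain x y where d: "d = [x, y]" using bounded_exps_2 by blast
    show "G d * mps_monom 1 [mps_zero, X1] d [b] = (if d = [0, b] then G d else 0)"
      unfolding d mps_monom_zero_X by auto
  qed
  also have "\<dots> = G [0, b]" by (subst sum.delta[OF finite_bounded_exps]) (simp add: bounded_exps_def)
  finally have "mps_comp 1 G [mps_zero, X1] [b] = G [0, b]" .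
  then show ?thesis using G_l0 by (simp add: mps_var_def One_nat_def)
qed

lemma G_coeff_b_0: "G [b, 0] = (if b = 1 then 1 else 0)"
proof -
  have o: "\<forall>h\<in>set [X1::'a mps, mps_zero]. ord_ge 1 h" using X1_ord by simp
  have "mps_comp 1 G [X1, mps_zero] [b] = (\<Sum>d\<in>bounded_exps 2 b. G d * mps_monom 1 [X1, mps_zero] d [b])"
    using mps_comp_range[of "[b]" 1 "[X1::'a mps, mps_zero]" b G] o by (simp add: One_nat_def numeral_2_eq_2)
  also have "\<dots> = (\<Sum>d\<in>bounded_exps 2 b. if d = [b, 0] then G d else 0)"
  proof (rule sum.cong[OF refl])
    fix d assume "d \<in> bounded_exps 2 b"
    then obtain x y where d: "d = [x, y]" using bounded_exps_2 by blast
    show "G d * mps_monom 1 [X1, mps_zero] d [b] = (if d = [b, 0] then G d else 0)"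
      unfolding d mps_monom_X_zero by auto
  qed
  also have "\<dots> = G [b, 0]" by (subst sum.delta[OF finite_bounded_exps]) (simp add: bounded_exps_def)
  finally have "mps_comp 1 G [X1, mps_zero] [b] = G [b, 0]" .
  then show ?thesis using G_r0 by (simp add: mps_var_def One_nat_def)
qed

lemma G_linear_coeffs: "G [0,0] = 0" "G [1,0] = 1" "G [0,1] = 1"
  using G_const G_coeff_b_0[of 1] G_coeff_0_b[of 1] by simp_all

lemma G_eq_y_plus_xpart: "G = mps_add (mps_var 2 1) (xpart G)"
proof (rule ext)
  fix c
  show "G c = mps_add (mps_var 2 1) (xpart G) c"
  proof (cases "length c = 2")
    case False
    have g: "G c = 0" by (rule mps_out[OF G_mps False])
    have v: "mps_var 2 1 c = (0::'a)" by (rule mps_out[OF var_in_mps False])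
    show ?thesis unfolding mps_add_def xpart_def g v by simp
  next
    case True
    then obtain x y where c: "c = [x, y]" by (cases c; cases "tl c") (auto simp: numeral_2_eq_2)
    show ?thesis
    proof (cases "x = 0")
      case True then show ?thesis using c G_coeff_0_b[of y]
        by (simp add: mps_add_def xpart_def mps_var_def numeral_2_eq_2 One_nat_def)
    next
      case False then show ?thesis using c
        by (simp add: mps_add_def xpart_def mps_var_def numeral_2_eq_2 One_nat_def)
    qed
  qed
qed

lemma xpart_const: "xpart G [0,0] = 0" by (simp add: xpart_def)

lemma mps_comp_X1_split: assumes i: "i \<in> cochains 1"
  shows "mps_comp 1 G [X1, i] = mps_add i (xpart_subst G i)"
proof -
  have o: "\<forall>h\<in>set [X1, i]. ord_ge 1 h" using X1_ord cochain_ord[OF i] by simp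
  have "mps_comp 1 (mps_var 2 1) [X1, i] = i"
    using mps_comp_var_cochain[of "[X1, i]" 2 1 1] o i by simp
  then show ?thesis
    by (subst G_eq_y_plus_xpart) (simp add: mps_comp_add_left xpart_subst_def)
qed

lemma xpart_subst_cochain: "i \<in> cochains 1 \<Longrightarrow> xpart_subst G i \<in> cochains 1"
  unfolding xpart_subst_def by (rule mps_comp_cochain) (simp_all add: X1_ord cochain_ord numeral_2_eq_2 xpart_const)

lemma xpart_subst_contract:
  assumes i: "i \<in> cochains 1" and j: "j \<in> cochains 1" and a: "agree m i j"
  shows "agree (m+1) (xpart_subst G i) (xpart_subst G j)"
  unfolding agree_def
proof (intro allI impI)
  fix e :: "nat list" assume e: "sum_list e \<le> m + 1"
  show "xpart_subst G i e = xpart_subst G j e"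
  proof (cases "length e = 1")
    case False then show ?thesis by (simp add: xpart_subst_def mps_comp_out)
  next
    case True
    have oi: "\<forall>h\<in>set [X1, i]. ord_ge 1 h" using X1_ord cochain_ord[OF i] by simp
    have oj: "\<forall>h\<in>set [X1, j]. ord_ge 1 h" using X1_ord cochain_ord[OF j] by simp
    have "xpart_subst G i e = (\<Sum>c\<in>bounded_exps 2 (m+1). xpart G c * mps_monom 1 [X1, i] c e)"
      using mps_comp_range[of e 1 "[X1, i]" "m+1" "xpart G"] True oi e by (simp add: xpart_subst_def numeral_2_eq_2)
    also have "\<dots> = (\<Sum>c\<in>bounded_exps 2 (m+1). xpart G c * mps_monom 1 [X1, j] c e)"
    proof (rule sum.cong[OF refl])
      fix c assume "c \<in> bounded_exps 2 (m+1)"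
      then obtain x y where c: "c = [x, y]" using bounded_exps_2 by blast
      show "xpart G c * mps_monom 1 [X1, i] c e = xpart G c * mps_monom 1 [X1, j] c e"
      proof (cases x)
        case 0 then show ?thesis using c by (simp add: xpart_def)
      next
        case (Suc x')
        have ag: "agree m (mps_mult 1 (mps_pow 1 X1 x') (mps_mult 1 (mps_pow 1 i y) (mps_one 1)))
                           (mps_mult 1 (mps_pow 1 X1 x') (mps_mult 1 (mps_pow 1 j y) (mps_one 1)))"
          by (intro agree_mult agree_pow a agree_refl)
        have "agree (m+1) (mps_mult 1 X1 (mps_mult 1 (mps_pow 1 X1 x') (mps_mult 1 (mps_pow 1 i y) (mps_one 1))))
                           (mps_mult 1 X1 (mps_mult 1 (mps_pow 1 X1 x') (mps_mult 1 (mps_pow 1 j y) (mps_one 1))))"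
          by (rule agree_mult_ord[OF X1_ord ag])
        then have "mps_monom 1 [X1, i] c e = mps_monom 1 [X1, j] c e"
          using c Suc e by (simp add: agree_def mps_pow_Suc mps_mult_assoc)
        then show ?thesis by simp
      qed
    qed
    also have "\<dots> = xpart_subst G j e"
      using mps_comp_range[of e 1 "[X1, j]" "m+1" "xpart G"] True oj e by (simp add: xpart_subst_def numeral_2_eq_2)
    finally show ?thesis .
  qed
qed

lemma inv_approx_cochain: "inv_approx G m \<in> cochains 1"
proof (induction m)
  case 0 then show ?case by simp
next
  case (Suc m)
  have "xpart_subst G (inv_approx G m) \<in> cochains 1" by (rule xpart_subst_cochain[OF Suc])
  then show ?case by (simp add: cochains_def mps_def)
qed

lemma inv_approx_agree_Suc: "agree m (inv_approx G m) (inv_approx G (Suc m))"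
proof (induction m)
  case 0 then show ?case using agree_cochains0 inv_approx_cochain by blast
next
  case (Suc m)
  have "agree (m+1) (xpart_subst G (inv_approx G m)) (xpart_subst G (inv_approx G (Suc m)))"
    by (rule xpart_subst_contract[OF inv_approx_cochain inv_approx_cochain Suc])
  then show ?case by (simp add: agree_def)
qed

lemma inv_approx_agree: "m \<le> m' \<Longrightarrow> agree m (inv_approx G m) (inv_approx G m')"
proof (induction m' rule: dec_induct)
  case base then show ?case by simp
next
  case (step k)
  have "agree m (inv_approx G k) (inv_approx G (Suc k))" using agree_mono[OF inv_approx_agree_Suc[of k] step(1)] .
  then show ?case using step(3) agree_trans by blast
qed

definition inv_series :: "'a mps" where "inv_series = (\<lambda>e. inv_approx G (sum_list e) e)"

lemma inv_series_agree: "agree m inv_series (inv_approx G m)"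
  unfolding agree_def
proof (intro allI impI)
  fix e :: "nat list" assume "sum_list e \<le> m"
  then have "agree (sum_list e) (inv_approx G (sum_list e)) (inv_approx G m)" by (rule inv_approx_agree)
  then show "inv_series e = inv_approx G m e" by (simp add: agree_def inv_series_def)
qed

lemma inv_series_cochain: "inv_series \<in> cochains 1"
proof -
  have "\<And>e. length e \<noteq> 1 \<Longrightarrow> inv_series e = 0"
    unfolding inv_series_def using inv_approx_cochain by (simp add: cochains_def mps_def)
  moreover have "inv_series [0] = 0" by (simp add: inv_series_def mps_zero_def)
  ultimately show ?thesis by (simp add: cochains_def mps_def One_nat_def)
qed

lemma inv_series_inverse: "mps_comp 1 G [X1, inv_series] = mps_zero"
proof (rule ext)
  fix e
  show "mps_comp 1 G [X1, inv_series] e = mps_zero e"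
  proof (cases "length e = 1")
    case False then show ?thesis by (simp add: mps_comp_out mps_zero_def)
  next
    case True
    define m where "m = sum_list e"
    have "xpart_subst G inv_series e = xpart_subst G (inv_approx G m) e"
      using xpart_subst_contract[OF inv_series_cochain inv_approx_cochain inv_series_agree[of m]] by (simp add: agree_def m_def)
    moreover have "inv_series e = inv_approx G (Suc m) e"
      using inv_series_agree[of "Suc m"] by (simp add: agree_def m_def)
    ultimately show ?thesis
      using mps_comp_X1_split[OF inv_series_cochain] by (simp add: mps_add_def mps_zero_def)
  qed
qed

lemma fgl_inv_exists: "\<exists>i. i \<in> mps 1 \<and> i [0] = 0 \<and> mps_comp 1 G [mps_var 1 0, i] = mps_zero"
  using inv_series_cochain inv_series_inverse by (auto simp: cochains_def One_nat_def)

lemma fgl_inv_props: "fgl_inv G \<in> cochains 1" "mps_comp 1 G [mps_var 1 0, fgl_inv G] = mps_zero"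
proof -
  have "fgl_inv G \<in> mps 1 \<and> fgl_inv G [0] = 0 \<and> mps_comp 1 G [mps_var 1 0, fgl_inv G] = mps_zero"
    unfolding fgl_inv_def by (rule someI_ex[OF fgl_inv_exists])
  then show "fgl_inv G \<in> cochains 1" "mps_comp 1 G [mps_var 1 0, fgl_inv G] = mps_zero"
    by (simp_all add: cochains_def One_nat_def)
qed

lemma cneg_cochain: "f \<in> cochains n \<Longrightarrow> cneg G n f \<in> cochains n"
  unfolding cneg_def
proof (rule mps_comp_cochain)
  assume f: "f \<in> cochains n"
  show "\<forall>g\<in>set [f]. ord_ge 1 g" using cochain_ord[OF f] by simp
  show "fgl_inv G (replicate (length [f]) 0) = 0" using fgl_inv_props(1) by (simp add: cochains_def One_nat_def)
qed

lemma cadd_cneg: assumes f: "f \<in> cochains n" shows "cadd G n f (cneg G n f) = mps_zero"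
proof -
  have "mps_comp n (mps_comp 1 G [X1, fgl_inv G]) [f] = mps_comp n G [mps_comp n X1 [f], mps_comp n (fgl_inv G) [f]]"
    by (rule mps_comp_assoc2) (simp_all add: cochain_ord[OF f] X1_ord cochain_ord[OF fgl_inv_props(1)])
  then show ?thesis using fgl_inv_props(2) mps_comp_X1[OF f] by (simp add: cadd_def cneg_def)
qed

lemma cochain_group_comm: "comm_group (cochain_group G n)"
proof (rule comm_groupI)
  show "\<one>\<^bsub>cochain_group G n\<^esub> \<in> carrier (cochain_group G n)" by (simp add: cochain_group_def)
next
  fix x y assume "x \<in> carrier (cochain_group G n)" "y \<in> carrier (cochain_group G n)"
  then show "x \<otimes>\<^bsub>cochain_group G n\<^esub> y \<in> carrier (cochain_group G n)"
    by (simp add: cochain_group_def cadd_closed)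
next
  fix x y z assume "x \<in> carrier (cochain_group G n)" "y \<in> carrier (cochain_group G n)" "z \<in> carrier (cochain_group G n)"
  then show "x \<otimes>\<^bsub>cochain_group G n\<^esub> y \<otimes>\<^bsub>cochain_group G n\<^esub> z = x \<otimes>\<^bsub>cochain_group G n\<^esub> (y \<otimes>\<^bsub>cochain_group G n\<^esub> z)"
    by (simp add: cochain_group_def cadd_assoc)
next
  fix x y assume "x \<in> carrier (cochain_group G n)" "y \<in> carrier (cochain_group G n)"
  then show "x \<otimes>\<^bsub>cochain_group G n\<^esub> y = y \<otimes>\<^bsub>cochain_group G n\<^esub> x"
    by (simp add: cochain_group_def cadd_comm)
next
  fix x assume "x \<in> carrier (cochain_group G n)"
  then show "\<one>\<^bsub>cochain_group G n\<^esub> \<otimes>\<^bsub>cochain_group G n\<^esub> x = x"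
    by (simp add: cochain_group_def cadd_l0)
next
  fix x assume x: "x \<in> carrier (cochain_group G n)"
  then have "cneg G n x \<in> cochains n" "cadd G n (cneg G n x) x = mps_zero"
    using cneg_cochain cadd_cneg cadd_comm by (auto simp: cochain_group_def)
  then show "\<exists>y\<in>carrier (cochain_group G n). y \<otimes>\<^bsub>cochain_group G n\<^esub> x = \<one>\<^bsub>cochain_group G n\<^esub>"
    by (auto simp: cochain_group_def)
qed

end

lemma hom_mult_pointwise:
  assumes H: "comm_group H" and A: "group A" and f: "f \<in> hom A H" and g: "g \<in> hom A H"
  shows "(\<lambda>x. f x \<otimes>\<^bsub>H\<^esub> g x) \<in> hom A H"
proof (rule homI)
  interpret H: comm_group H by (rule H)
  fix x assume x: "x \<in> carrier A"
  show "f x \<otimes>\<^bsub>H\<^esub> g x \<in> carrier H" using f g x by (simp add: hom_in_carrier)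
next
  interpret H: comm_group H by (rule H)
  interpret A: group A by (rule A)
  fix x y assume x: "x \<in> carrier A" and y: "y \<in> carrier A"
  have fx: "f x \<in> carrier H" and fy: "f y \<in> carrier H" and gx: "g x \<in> carrier H" and gy: "g y \<in> carrier H"
    using f g x y by (simp_all add: hom_in_carrier)
  have "f (x \<otimes>\<^bsub>A\<^esub> y) \<otimes>\<^bsub>H\<^esub> g (x \<otimes>\<^bsub>A\<^esub> y) = (f x \<otimes>\<^bsub>H\<^esub> f y) \<otimes>\<^bsub>H\<^esub> (g x \<otimes>\<^bsub>H\<^esub> g y)"
    by (simp add: Group.hom_mult[OF f x y] Group.hom_mult[OF g x y])
  also have "\<dots> = (f x \<otimes>\<^bsub>H\<^esub> g x) \<otimes>\<^bsub>H\<^esub> (f y \<otimes>\<^bsub>H\<^esub> g y)"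
    using fx fy gx gy by (simp add: H.m_ac)
  finally show "f (x \<otimes>\<^bsub>A\<^esub> y) \<otimes>\<^bsub>H\<^esub> g (x \<otimes>\<^bsub>A\<^esub> y) = (f x \<otimes>\<^bsub>H\<^esub> g x) \<otimes>\<^bsub>H\<^esub> (f y \<otimes>\<^bsub>H\<^esub> g y)" .
qed

lemma hom_inv_pointwise:
  assumes H: "comm_group H" and A: "group A" and f: "f \<in> hom A H"
  shows "(\<lambda>x. inv\<^bsub>H\<^esub> f x) \<in> hom A H"
proof (rule homI)
  interpret H: comm_group H by (rule H)
  fix x assume x: "x \<in> carrier A"
  show "inv\<^bsub>H\<^esub> f x \<in> carrier H" using f x by (simp add: hom_in_carrier)
next
  interpret H: comm_group H by (rule H)
  interpret A: group A by (rule A)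
  fix x y assume x: "x \<in> carrier A" and y: "y \<in> carrier A"
  have fx: "f x \<in> carrier H" and fy: "f y \<in> carrier H" using f x y by (simp_all add: hom_in_carrier)
  show "inv\<^bsub>H\<^esub> f (x \<otimes>\<^bsub>A\<^esub> y) = inv\<^bsub>H\<^esub> f x \<otimes>\<^bsub>H\<^esub> inv\<^bsub>H\<^esub> f y"
    by (simp add: Group.hom_mult[OF f x y] H.inv_mult[OF fx fy])
qed

lemma foldl_mult_hom:
  assumes H: "comm_group H" and A: "group A" and h: "\<forall>i\<in>set L. h i \<in> hom A H"
  shows "(\<lambda>x. foldl (\<lambda>acc i. acc \<otimes>\<^bsub>H\<^esub> h i x) \<one>\<^bsub>H\<^esub> L) \<in> hom A H"
  using h
proof (induction L rule: rev_induct)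
  case Nil
  interpret H: comm_group H by (rule H)
  interpret A: group A by (rule A)
  show ?case by (rule homI) simp_all
next
  case (snoc i L)
  have "(\<lambda>x. foldl (\<lambda>acc i. acc \<otimes>\<^bsub>H\<^esub> h i x) \<one>\<^bsub>H\<^esub> L \<otimes>\<^bsub>H\<^esub> h i x) \<in> hom A H"
    by (rule hom_mult_pointwise[OF H A]) (use snoc in auto)
  then show ?case by simp
qed

lemma length_face_subst[simp]: "length (face_subst F n i) = n"
  by (simp add: face_subst_def)

locale fgl_pair =
  fixes F G :: "('a::comm_ring_1) mps"
  assumes fgl_F: "fgl F" and fgl_G: "fgl G"
begin

sublocale G: fgl_group G by (rule fgl_group.intro[OF fgl_G])

lemma F_const: "F [0,0] = 0" using fgl_group.G_const[OF fgl_group.intro[OF fgl_F]] .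

lemma face_subst_cochains: "\<forall>g\<in>set (face_subst F n i). g \<in> cochains (n+1)"
proof -
  have v: "\<And>j. j < n + 1 \<Longrightarrow> mps_var (n+1) j \<in> cochains (n+1)" by (rule var_cochain)
  have c: "\<And>a b. a < n+1 \<Longrightarrow> b < n+1 \<Longrightarrow> mps_comp (n+1) F [mps_var (n+1) a, mps_var (n+1) b] \<in> cochains (n+1)"
  proof -
    fix a b assume "a < n+1" "b < n+1"
    then have "ord_ge 1 (mps_var (n+1) a :: 'a mps)" "ord_ge 1 (mps_var (n+1) b :: 'a mps)" by (simp_all add: var_ord)
    then have "\<forall>g\<in>set [mps_var (n+1) a, mps_var (n+1) b :: 'a mps]. ord_ge 1 g" by simp
    then show "mps_comp (n+1) F [mps_var (n+1) a, mps_var (n+1) b] \<in> cochains (n+1)"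
      by (rule mps_comp_cochain) (simp add: F_const numeral_2_eq_2)
  qed
  show ?thesis unfolding face_subst_def by (auto intro!: v c)
qed

lemma face_subst_ord: "\<forall>g\<in>set (face_subst F n i). ord_ge 1 g"
  using face_subst_cochains cochain_ord by blast

lemma face_cochain: "f \<in> cochains n \<Longrightarrow> face F n i f \<in> cochains (n+1)"
  unfolding face_def by (rule mps_comp_cochain) (simp_all add: face_subst_ord cochains_def)

lemma face_cadd: assumes f: "f \<in> cochains n" and g: "g \<in> cochains n"
  shows "face F n i (cadd G n f g) = cadd G (n+1) (face F n i f) (face F n i g)"
  unfolding face_def cadd_def
  by (rule mps_comp_assoc2) (simp_all add: face_subst_ord cochain_ord[OF f] cochain_ord[OF g])

lemma face_hom: "face F n i \<in> hom (cochain_group G n) (cochain_group G (n+1))"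
  by (rule homI) (simp_all add: cochain_group_def face_cochain face_cadd)

lemma inv_is_cneg: "x \<in> cochains m \<Longrightarrow> inv\<^bsub>cochain_group G m\<^esub> x = cneg G m x"
proof -
  assume x: "x \<in> cochains m"
  interpret A: comm_group "cochain_group G m" by (rule G.cochain_group_comm)
  show ?thesis
    by (rule A.inv_equality) (use x G.cadd_cneg G.cadd_comm G.cneg_cochain in \<open>auto simp: cochain_group_def\<close>)
qed

lemma coboundary_foldl: "coboundary F G n f = foldl (\<lambda>acc i. acc \<otimes>\<^bsub>cochain_group G (n+1)\<^esub>
      (if even i then face F n i f else inv\<^bsub>cochain_group G (n+1)\<^esub> (face F n i f))) \<one>\<^bsub>cochain_group G (n+1)\<^esub> [0..<n+2]"
  if "f \<in> cochains n"
proof -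
  have "\<And>i. (if even i then face F n i f else cneg G (n+1) (face F n i f)) =
           (if even i then face F n i f else inv\<^bsub>cochain_group G (n+1)\<^esub> (face F n i f))"
    using inv_is_cneg face_cochain[OF that] by simp
  then show ?thesis by (simp add: coboundary_def cochain_group_def)
qed

lemma coboundary_hom: "coboundary F G n \<in> hom (cochain_group G n) (cochain_group G (n+1))"
proof -
  interpret A: comm_group "cochain_group G n" by (rule G.cochain_group_comm)
  define hh where "hh = (\<lambda>i f. if even i then face F n i f else inv\<^bsub>cochain_group G (n+1)\<^esub> (face F n i f))"
  define Fo where "Fo = (\<lambda>x. foldl (\<lambda>acc i. acc \<otimes>\<^bsub>cochain_group G (n+1)\<^esub> hh i x) \<one>\<^bsub>cochain_group G (n+1)\<^esub> [0..<n+2])"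
  have h: "Fo \<in> hom (cochain_group G n) (cochain_group G (n+1))"
    unfolding Fo_def
  proof (rule foldl_mult_hom[OF G.cochain_group_comm A.is_group], rule ballI)
    fix i
    show "hh i \<in> hom (cochain_group G n) (cochain_group G (n+1))"
    proof (cases "even i")
      case True then show ?thesis using face_hom by (simp add: hh_def)
    next
      case False then show ?thesis
        using hom_inv_pointwise[OF G.cochain_group_comm A.is_group face_hom] by (simp add: hh_def)
    qed
  qed
  have eq: "\<And>x. x \<in> carrier (cochain_group G n) \<Longrightarrow> coboundary F G n x = Fo x"
    unfolding Fo_def hh_def by (rule coboundary_foldl) (simp add: cochain_group_def)
  show ?thesis
  proof (rule homI)
    fix x assume "x \<in> carrier (cochain_group G n)"
    then show "coboundary F G n x \<in> carrier (cochain_group G (n+1))"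
      using hom_in_carrier[OF h] eq by simp
  next
    fix x y assume x: "x \<in> carrier (cochain_group G n)" and y: "y \<in> carrier (cochain_group G n)"
    then have xy: "x \<otimes>\<^bsub>cochain_group G n\<^esub> y \<in> carrier (cochain_group G n)" by simp
    show "coboundary F G n (x \<otimes>\<^bsub>cochain_group G n\<^esub> y) = coboundary F G n x \<otimes>\<^bsub>cochain_group G (n+1)\<^esub> coboundary F G n y"
      using Group.hom_mult[OF h x y] eq[OF x] eq[OF y] eq[OF xy] by simp
  qed
qed

lemma coboundary_cochain: "f \<in> cochains n \<Longrightarrow> coboundary F G n f \<in> cochains (n+1)"
  using hom_in_carrier[OF coboundary_hom, of f n] by (simp add: cochain_group_def)

lemma coboundary_group_hom: "group_hom (cochain_group G n) (cochain_group G (n+1)) (coboundary F G n)"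
proof -
  interpret A: comm_group "cochain_group G n" by (rule G.cochain_group_comm)
  interpret B: comm_group "cochain_group G (n+1)" by (rule G.cochain_group_comm)
  show ?thesis
    by (rule group_hom.intro[OF A.is_group B.is_group]) (simp add: group_hom_axioms_def coboundary_hom)
qed

lemma coboundary_cadd: "f \<in> cochains n \<Longrightarrow> g \<in> cochains n \<Longrightarrow>
   coboundary F G n (cadd G n f g) = cadd G (n+1) (coboundary F G n f) (coboundary F G n g)"
  using Group.hom_mult[OF coboundary_hom, of f n g] by (simp add: cochain_group_def)

end

lemma (in group) rcos_absorb: "subgroup B G \<Longrightarrow> b \<in> B \<Longrightarrow> a \<in> carrier G \<Longrightarrow> B #> (b \<otimes> a) = B #> a"
  by (metis rcosI repr_independence subgroup.subset)

lemma (in group) rcos_eq_iff: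
  assumes "subgroup B G" "a \<in> carrier G" "a' \<in> carrier G"
  shows "B #> a = B #> a' \<longleftrightarrow> a \<otimes> inv a' \<in> B"
  using assms repr_independence rcos_self subgroup.rcos_module[OF assms(1) is_group] by metis

context fgl_pair
begin

lemma coboundaries_subgroup: "subgroup (coboundaries F G n) (cochain_group G n)"
proof (cases n)
  case 0
  interpret A: comm_group "cochain_group G n" by (rule G.cochain_group_comm)
  show ?thesis using A.triv_subgroup 0 by (simp add: coboundaries_def cochain_group_def)
next
  case (Suc m)
  show ?thesis
    using group_hom.img_is_subgroup[OF coboundary_group_hom[of m]] Suc
    by (simp add: coboundaries_def cochain_group_def Suc_eq_plus1)
qed

lemma coboundaries_normal: "normal (coboundaries F G n) (cochain_group G n)"
proof -
  interpret A: comm_group "cochain_group G n" by (rule G.cochain_group_comm)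
  show ?thesis by (rule A.subgroup_imp_normal[OF coboundaries_subgroup])
qed

lemma coboundaries_sub: "coboundaries F G n \<subseteq> cochains n"
  using subgroup.subset[OF coboundaries_subgroup] by (simp add: cochain_group_def)

lemma cocycles_sub: "cocycles F G n \<subseteq> cochains n"
  by (auto simp: cocycles_def)

lemma rcos_cocycle_group: "B #>\<^bsub>cocycle_group F G n\<^esub> a = B #>\<^bsub>cochain_group G n\<^esub> a"
  by (simp add: r_coset_def cocycle_group_def cochain_group_def)

lemma cohom_class_rcos: "cohom_class F G n f = coboundaries F G n #>\<^bsub>cochain_group G n\<^esub> f"
  by (simp add: cohom_class_def rcos_cocycle_group)

lemma cohom_carrier: "carrier (cohom F G n) = cohom_class F G n ` cocycles F G n"
  by (auto simp: cohom_def FactGroup_def RCOSETS_def cohom_class_def cocycle_group_def)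

lemma cohom_one: "\<one>\<^bsub>cohom F G n\<^esub> = coboundaries F G n"
  by (simp add: cohom_def FactGroup_def)

lemma cohom_class_zero: "cohom_class F G n mps_zero = coboundaries F G n"
proof -
  interpret A: comm_group "cochain_group G n" by (rule G.cochain_group_comm)
  show ?thesis
    using A.coset_mult_one[OF subgroup.subset[OF coboundaries_subgroup]]
    by (simp add: cohom_class_rcos cochain_group_def)
qed

lemma cohom_class_eq_coboundaries:
  assumes "a \<in> cochains n"
  shows "cohom_class F G n a = coboundaries F G n \<longleftrightarrow> a \<in> coboundaries F G n"
proof -
  interpret A: comm_group "cochain_group G n" by (rule G.cochain_group_comm)
  show ?thesis
    using A.coset_join1[of "coboundaries F G n" a] A.coset_join2[of a "coboundaries F G n"]
      coboundaries_subgroup assms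
    by (auto simp: cohom_class_rcos cochain_group_def)
qed

lemma cohom_class_mult:
  assumes "a \<in> cochains n" "b \<in> cochains n"
  shows "cohom_class F G n a \<otimes>\<^bsub>cohom F G n\<^esub> cohom_class F G n b = cohom_class F G n (cadd G n a b)"
proof -
  have "cohom_class F G n a \<otimes>\<^bsub>cohom F G n\<^esub> cohom_class F G n b
      = coboundaries F G n #>\<^bsub>cochain_group G n\<^esub> a <#>\<^bsub>cochain_group G n\<^esub> (coboundaries F G n #>\<^bsub>cochain_group G n\<^esub> b)"
    by (simp add: cohom_def FactGroup_def cohom_class_rcos set_mult_def cocycle_group_def cochain_group_def)
  also have "\<dots> = cohom_class F G n (cadd G n a b)"
    using normal.rcos_sum[OF coboundaries_normal, where x = a and y = b] assms
    by (simp add: cochain_group_def cohom_class_rcos)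
  finally show ?thesis .
qed

lemma cohom_class_cadd_coboundary:
  assumes "b \<in> coboundaries F G n" "a \<in> cochains n"
  shows "cohom_class F G n (cadd G n b a) = cohom_class F G n a"
proof -
  interpret A: comm_group "cochain_group G n" by (rule G.cochain_group_comm)
  show ?thesis
    using A.rcos_absorb[OF coboundaries_subgroup assms(1)] assms(2)
    by (simp add: cohom_class_rcos cochain_group_def)
qed

lemma cohom_class_eq_iff:
  assumes "a \<in> cochains n" "a' \<in> cochains n"
  shows "cohom_class F G n a = cohom_class F G n a' \<longleftrightarrow> cadd G n a (cneg G n a') \<in> coboundaries F G n"
proof -
  interpret A: comm_group "cochain_group G n" by (rule G.cochain_group_comm)
  show ?thesis
    using A.rcos_eq_iff[OF coboundaries_subgroup, of a a'] assms inv_is_cneg[OF assms(2)]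
    by (simp add: cohom_class_rcos cochain_group_def)
qed

lemma cohom_class_some_rep:
  assumes "a \<in> cochains n"
  obtains b where "b \<in> coboundaries F G n" "(SOME x. x \<in> cohom_class F G n a) = cadd G n b a"
proof -
  interpret A: comm_group "cochain_group G n" by (rule G.cochain_group_comm)
  have "a \<in> cohom_class F G n a"
    using A.rcos_self[OF _ coboundaries_subgroup] assms by (simp add: cohom_class_rcos cochain_group_def)
  then have "(SOME x. x \<in> cohom_class F G n a) \<in> cohom_class F G n a"
    by (rule someI[where P = "\<lambda>x. x \<in> cohom_class F G n a"])
  then show ?thesis using that by (auto simp: cohom_class_rcos r_coset_def cochain_group_def)
qed

end

definition induced_cohom_map ::
    "('a mps \<Rightarrow> 'b mps) \<Rightarrow> ('b::comm_ring_1) mps \<Rightarrow> 'b mps \<Rightarrow> nat \<Rightarrow> ('a::comm_ring_1) mps set \<Rightarrow> 'b mps set" where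
  "induced_cohom_map f F' G' n C = cohom_class F' G' n (f (SOME x. x \<in> C))"

lemma cohom_map_induced: "cohom_map \<psi> F' G' n = induced_cohom_map (mps_map \<psi>) F' G' n"
  by (simp add: fun_eq_iff cohom_map_def induced_cohom_map_def)

locale cochain_map = src: fgl_pair F G + tgt: fgl_pair F' G'
  for F G :: "('a::comm_ring_1) mps" and F' G' :: "('b::comm_ring_1) mps" +
  fixes f :: "'a mps \<Rightarrow> 'b mps"
  assumes maps_cochains: "x \<in> cochains m \<Longrightarrow> f x \<in> cochains m"
    and maps_cadd: "x \<in> cochains m \<Longrightarrow> y \<in> cochains m \<Longrightarrow> f (cadd G m x y) = cadd G' m (f x) (f y)"
    and maps_face: "x \<in> cochains n \<Longrightarrow> f (face F n i x) = face F' n i (f x)"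
begin

lemma cochain_group_hom: "group_hom (cochain_group G m) (cochain_group G' m) f"
proof -
  interpret A: comm_group "cochain_group G m" by (rule src.G.cochain_group_comm)
  interpret B: comm_group "cochain_group G' m" by (rule tgt.G.cochain_group_comm)
  show ?thesis
    by unfold_locales (auto intro!: homI simp: cochain_group_def maps_cochains maps_cadd)
qed

lemma maps_zero: "f mps_zero = mps_zero"
  using group_hom.hom_one[OF cochain_group_hom[of 0]] by (simp add: cochain_group_def)

lemma maps_cneg:
  assumes x: "x \<in> cochains m"
  shows "f (cneg G m x) = cneg G' m (f x)"
proof -
  have "f (inv\<^bsub>cochain_group G m\<^esub> x) = inv\<^bsub>cochain_group G' m\<^esub> (f x)"
    by (rule group_hom.hom_inv[OF cochain_group_hom]) (simp add: cochain_group_def x)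
  then show ?thesis using src.inv_is_cneg[OF x] tgt.inv_is_cneg[OF maps_cochains[OF x]] by simp
qed

lemma maps_coboundary:
  assumes x: "x \<in> cochains n"
  shows "f (coboundary F G n x) = coboundary F' G' n (f x)"
proof -
  define summand where "summand = (\<lambda>i. if even i then face F n i x else cneg G (n+1) (face F n i x))"
  define summand' where "summand' = (\<lambda>i. if even i then face F' n i (f x) else cneg G' (n+1) (face F' n i (f x)))"
  have summand_cochain: "summand i \<in> cochains (n+1)" for i
    using src.face_cochain[OF x] src.G.cneg_cochain[OF src.face_cochain[OF x]] by (simp add: summand_def)
  have f_summand: "f (summand i) = summand' i" for i
    using maps_face[OF x] maps_cneg[OF src.face_cochain[OF x]] by (simp add: summand_def summand'_def)
  have "acc \<in> cochains (n+1) \<Longrightarrow>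
      f (foldl (\<lambda>acc i. cadd G (n+1) acc (summand i)) acc L) = foldl (\<lambda>acc i. cadd G' (n+1) acc (summand' i)) (f acc) L"
    for acc L
  proof (induction L arbitrary: acc)
    case (Cons i L)
    then show ?case
      using src.G.cadd_closed[OF Cons.prems summand_cochain] maps_cadd[OF Cons.prems summand_cochain] f_summand
      by simp
  qed simp
  from this[OF zero_cochain] show ?thesis
    unfolding coboundary_def summand_def summand'_def maps_zero .
qed

lemma maps_coboundaries:
  assumes b: "b \<in> coboundaries F G n"
  shows "f b \<in> coboundaries F' G' n"
proof (cases n)
  case 0
  then show ?thesis using b by (simp add: coboundaries_def maps_zero)
next
  case (Suc m)
  then obtain x where "x \<in> cochains m" "b = coboundary F G m x" using b by (auto simp: coboundaries_def)
  then show ?thesis using Suc by (auto simp: coboundaries_def maps_coboundary intro!: image_eqI maps_cochains)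
qed

lemma maps_cocycles: "z \<in> cocycles F G n \<Longrightarrow> f z \<in> cocycles F' G' n"
  by (simp add: cocycles_def maps_coboundary[symmetric] maps_zero maps_cochains)

lemma induced_cohom_class:
  assumes a: "a \<in> cochains n"
  shows "induced_cohom_map f F' G' n (cohom_class F G n a) = cohom_class F' G' n (f a)"
proof -
  obtain b where b: "b \<in> coboundaries F G n" and rep: "(SOME x. x \<in> cohom_class F G n a) = cadd G n b a"
    using src.cohom_class_some_rep[OF a] .
  have "b \<in> cochains n" using b src.coboundaries_sub by blast
  then show ?thesis
    using tgt.cohom_class_cadd_coboundary[OF maps_coboundaries[OF b] maps_cochains[OF a]]
    by (simp add: induced_cohom_map_def rep maps_cadd a)
qed

lemma induced_cohom_hom: "induced_cohom_map f F' G' n \<in> hom (cohom F G n) (cohom F' G' n)"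
proof (rule homI)
  fix C assume "C \<in> carrier (cohom F G n)"
  then obtain a where a: "a \<in> cocycles F G n" "C = cohom_class F G n a" by (auto simp: src.cohom_carrier)
  then have "a \<in> cochains n" using src.cocycles_sub by blast
  then show "induced_cohom_map f F' G' n C \<in> carrier (cohom F' G' n)"
    using a maps_cocycles by (simp add: induced_cohom_class tgt.cohom_carrier)
next
  fix C D assume "C \<in> carrier (cohom F G n)" "D \<in> carrier (cohom F G n)"
  then obtain a b where ab: "a \<in> cocycles F G n" "C = cohom_class F G n a"
      "b \<in> cocycles F G n" "D = cohom_class F G n b"
    by (auto simp: src.cohom_carrier)
  then have "a \<in> cochains n" "b \<in> cochains n" using src.cocycles_sub by auto
  then show "induced_cohom_map f F' G' n (C \<otimes>\<^bsub>cohom F G n\<^esub> D)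
      = induced_cohom_map f F' G' n C \<otimes>\<^bsub>cohom F' G' n\<^esub> induced_cohom_map f F' G' n D"
    by (simp add: ab src.cohom_class_mult tgt.cohom_class_mult induced_cohom_class
        src.G.cadd_closed maps_cochains maps_cadd)
qed

end

lemma cadd_map: "is_ring_hom \<psi> \<Longrightarrow> mps_map \<psi> (cadd G m x y) = cadd (mps_map \<psi> G) m (mps_map \<psi> x) (mps_map \<psi> y)"
  by (simp add: cadd_def mps_map_comp)

lemma face_subst_map: "is_ring_hom \<psi> \<Longrightarrow> map (mps_map \<psi>) (face_subst F n i) = face_subst (mps_map \<psi> F) n i"
  by (simp add: face_subst_def mps_map_var mps_map_comp)

lemma face_map: "is_ring_hom \<psi> \<Longrightarrow> mps_map \<psi> (face F n i f) = face (mps_map \<psi> F) n i (mps_map \<psi> f)"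
  by (simp add: face_def mps_map_comp face_subst_map)

lemma cochain_map_base_change:
  assumes "fgl F" "fgl G" "is_ring_hom \<psi>"
  shows "cochain_map F G (mps_map \<psi> F) (mps_map \<psi> G) (mps_map \<psi>)"
  by (intro cochain_map.intro cochain_map_axioms.intro fgl_pair.intro fgl_map assms)
     (simp_all add: mps_map_cochains cadd_map face_map assms)

section \<open>Dual numbers and the tangent embedding\<close>

lemma dual_plus[simp]: "Dual a b + Dual c d = Dual (a + c) (b + d)" by (simp add: plus_dual_def)
lemma dual_times[simp]: "Dual a b * Dual c d = Dual (a * c) (a * d + b * c)" by (simp add: times_dual_def)
lemma dual_zero: "(0::'a::comm_ring_1 dual) = Dual 0 0" by (simp add: zero_dual_def)
lemma dual_one: "(1::'a::comm_ring_1 dual) = Dual 1 0" by (simp add: one_dual_def)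
lemma dre_zero[simp]: "dre (0::'a::comm_ring_1 dual) = 0" by (simp add: zero_dual_def)
lemma deps_zero[simp]: "deps (0::'a::comm_ring_1 dual) = 0" by (simp add: zero_dual_def)
lemma dre_one[simp]: "dre (1::'a::comm_ring_1 dual) = 1" by (simp add: one_dual_def)
lemma dre_plus[simp]: "dre (x + y) = dre x + dre (y::'a::comm_ring_1 dual)" by (simp add: plus_dual_def)
lemma dre_times[simp]: "dre (x * y) = dre x * dre (y::'a::comm_ring_1 dual)" by (simp add: times_dual_def)

lemma dual_eps_times: "Dual 0 x * y = Dual 0 (x * dre (y::'a::comm_ring_1 dual))"
  by (cases y) simp

lemma Dual0_sum: "Dual 0 (sum f A) = (\<Sum>a\<in>A. Dual (0::'a::comm_ring_1) (f a))"
proof (induction A rule: infinite_finite_induct)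
  case (infinite A) then show ?case by (simp add: dual_zero)
next
  case empty then show ?case by (simp add: dual_zero)
next
  case (insert x F) then show ?case by (simp add: insert(3)[symmetric])
qed

lemma is_ring_hom_dre: "is_ring_hom (dre :: 'a::comm_ring_1 dual \<Rightarrow> 'a)"
  by (simp add: is_ring_hom_def)

lemma is_ring_hom_lift: "is_ring_hom (\<lambda>s::'a::comm_ring_1. Dual s 0)"
  by (simp add: is_ring_hom_def dual_one)

lemma is_ring_hom_dual_map: assumes h: "is_ring_hom \<psi>" shows "is_ring_hom (dual_map \<psi>)"
  using h is_ring_hom_0[OF h] by (simp add: is_ring_hom_def dual_map_def dual_one plus_dual_def times_dual_def)

lemma lift_dual_base: "(\<lambda>s. Dual s 0) \<circ> \<phi> = dual_base \<phi>" by (rule ext) (simp add: dual_base_def)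

lemma mps_add_in_mps: "(f::('a::comm_ring_1) mps) \<in> mps k \<Longrightarrow> g \<in> mps k \<Longrightarrow> mps_add f g \<in> mps k"
  by (auto simp: mps_def mps_add_def)

lemma mps_add_cochain: "f \<in> cochains k \<Longrightarrow> g \<in> cochains k \<Longrightarrow> mps_add f g \<in> cochains k"
  by (simp add: cochains_def mps_def mps_add_def)

lemma mps_comp_Ga: assumes a: "a \<in> cochains k" and b: "b \<in> cochains k"
  shows "mps_comp k Ga [a, b] = mps_add a b"
proof -
  have o: "\<forall>h\<in>set [a,b]. ord_ge 1 h" using cochain_ord[OF a] cochain_ord[OF b] by simp
  have "mps_comp k (mps_var 2 0) [a,b] = a" using mps_comp_var[of "[a,b]" 2 0 k] o cochain_mps[OF a] by simp
  moreover have "mps_comp k (mps_var 2 1) [a,b] = b" using mps_comp_var[of "[a,b]" 2 1 k] o cochain_mps[OF b] by simp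
  ultimately show ?thesis by (simp add: Ga_def mps_comp_add_left)
qed

lemma fgl_Ga: "fgl (Ga :: ('a::comm_ring_1) mps)"
proof -
  have X: "mps_var 1 0 \<in> (cochains 1 :: 'a mps set)" by (rule var_cochain) simp
  have V: "\<And>i. i < 3 \<Longrightarrow> mps_var 3 i \<in> (cochains 3 :: 'a mps set)" by (rule var_cochain)
  have Y2: "mps_var 2 1 \<in> (cochains 2 :: 'a mps set)" "mps_var 2 0 \<in> (cochains 2 :: 'a mps set)"
    by (simp_all add: var_cochain)
  have z: "mps_add (mps_var 1 0) mps_zero = (mps_var 1 0 :: 'a mps)" "mps_add mps_zero (mps_var 1 0) = (mps_var 1 0 :: 'a mps)"
    by (simp_all add: mps_add_def mps_zero_def)
  have "Ga \<in> (mps 2 :: 'a mps set)" by (simp add: Ga_def mps_add_in_mps)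
  moreover have "mps_comp 1 Ga [mps_var 1 0, mps_zero] = (mps_var 1 0 :: 'a mps)"
    using mps_comp_Ga[OF X zero_cochain] z by simp
  moreover have "mps_comp 1 Ga [mps_zero, mps_var 1 0] = (mps_var 1 0 :: 'a mps)"
    using mps_comp_Ga[OF zero_cochain X] z by simp
  moreover have "mps_comp 2 Ga [mps_var 2 1, mps_var 2 0] = (Ga :: 'a mps)"
    using mps_comp_Ga[OF Y2] by (simp add: Ga_def mps_add_def add.commute)
  moreover have "mps_comp 3 Ga [mps_comp 3 Ga [mps_var 3 0, mps_var 3 1], mps_var 3 2]
       = (mps_comp 3 Ga [mps_var 3 0, mps_comp 3 Ga [mps_var 3 1, mps_var 3 2]] :: 'a mps)"
  proof -
    have c: "mps_var 3 0 \<in> (cochains 3 :: 'a mps set)" "mps_var 3 1 \<in> (cochains 3 :: 'a mps set)" "mps_var 3 2 \<in> (cochains 3 :: 'a mps set)"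
      by (simp_all add: V)
    show ?thesis using mps_comp_Ga[OF c(1) c(2)] mps_comp_Ga[OF c(2) c(3)] mps_comp_Ga[OF mps_add_cochain[OF c(1) c(2)] c(3)]
        mps_comp_Ga[OF c(1) mps_add_cochain[OF c(2) c(3)]] by (simp add: mps_add_def add.assoc)
  qed
  ultimately show ?thesis by (simp add: fgl_def)
qed

definition eps :: "('a::comm_ring_1) mps \<Rightarrow> 'a dual mps" where
  "eps h = mps_map (Dual 0) h"

abbreviation lift :: "('a::comm_ring_1) mps \<Rightarrow> 'a dual mps" where
  "lift \<equiv> mps_map (\<lambda>s. Dual s 0)"

abbreviation red :: "('a::comm_ring_1) dual mps \<Rightarrow> 'a mps" where
  "red \<equiv> mps_map dre"

lemma eps_cochain: "h \<in> cochains k \<Longrightarrow> eps h \<in> cochains k"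
  by (simp add: cochains_def mps_def eps_def mps_map_def dual_zero)

lemma red_eps: "red (eps h) = mps_zero"
  by (rule ext) (simp add: eps_def mps_map_def mps_zero_def)

lemma eps_inj: "eps a = eps b \<Longrightarrow> a = b"
proof (rule ext)
  fix e assume "eps a = eps b"
  then have "eps a e = eps b e" by simp
  then show "a e = b e" by (simp add: eps_def mps_map_def)
qed

lemma red_zero_eps: "red x = mps_zero \<Longrightarrow> x = eps (mps_map deps x)"
proof (rule ext)
  fix e assume "red x = mps_zero"
  then have "dre (x e) = 0" by (metis mps_map_def mps_zero_def)
  then show "x e = eps (mps_map deps x) e" by (simp add: eps_def mps_map_def dual.expand)
qed

lemma red_lift: "red (lift h) = h"
  by (rule ext) (simp add: mps_map_def)

lemma eps_add: "eps (mps_add a b) = mps_add (eps a) (eps b)"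
  by (rule ext) (simp add: eps_def mps_map_def mps_add_def)

lemma eps_zero[simp]: "eps mps_zero = mps_zero"
  by (rule ext) (simp add: eps_def mps_map_def mps_zero_def dual_zero)

lemma deps_cochain: "x \<in> cochains k \<Longrightarrow> mps_map deps x \<in> cochains k"
  by (simp add: cochains_def mps_def mps_map_def)

lemma mps_mult_eps_left: "mps_mult k (eps a) B = eps (mps_mult k a (red B))"
proof (rule ext)
  fix e
  show "mps_mult k (eps a) B e = eps (mps_mult k a (red B)) e"
  proof (cases "length e = k")
    case True
    have "mps_mult k (eps a) B e = (\<Sum>x\<in>divisors_exp e. Dual 0 (a x * dre (B (map2 (-) e x))))"
      using True by (simp add: mps_mult_def eps_def mps_map_def dual_eps_times)
    also have "\<dots> = eps (mps_mult k a (red B)) e"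
      using True by (simp add: mps_mult_def eps_def mps_map_def Dual0_sum)
    finally show ?thesis .
  qed (simp add: mps_mult_def eps_def mps_map_def dual_zero)
qed

lemma mps_mult_eps_eps: "mps_mult k (eps a) (eps b) = mps_zero"
  by (simp add: mps_mult_eps_left red_eps)

lemma eps_mps: "a \<in> mps k \<Longrightarrow> eps a \<in> mps k"
  by (simp add: mps_def eps_def mps_map_def dual_zero)

lemma mps_pow_eps: assumes "a \<in> mps k"
  shows "mps_pow k (eps a) x = (if x = 0 then mps_one k else if x = 1 then eps a else mps_zero)"
proof (cases x)
  case 0 then show ?thesis by simp
next
  case (Suc y)
  show ?thesis
  proof (cases y)
    case 0 then show ?thesis using Suc eps_mps[OF assms] by (simp add: mps_pow_Suc mps_mult_one_right)
  next
    case (Suc z)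
    have "mps_pow k (eps a) x = mps_mult k (eps a) (mps_mult k (eps a) (mps_pow k (eps a) z))"
      using Suc \<open>x = Suc y\<close> by (simp add: mps_pow_Suc)
    also have "\<dots> = mps_zero" by (simp add: mps_mult_eps_left red_eps mps_mult_eps_eps)
    finally show ?thesis using Suc \<open>x = Suc y\<close> by simp
  qed
qed

lemma mps_comp_eps_lift: "mps_comp k (eps f) (map lift gs) = eps (mps_comp k f gs)"
proof (rule ext)
  fix e
  have monom_lift: "mps_monom k (map lift gs) d = lift (mps_monom k gs d)" for d
    using mps_map_monom[OF is_ring_hom_lift, of k gs d] by simp
  show "mps_comp k (eps f) (map lift gs) e = eps (mps_comp k f gs) e"
    by (simp add: mps_comp_monom monom_lift eps_def mps_map_def Dual0_sum dual_zero)
qed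

lemma mps_monom_eps: assumes a: "a \<in> mps k" and b: "b \<in> mps k"
  shows "mps_monom k [eps a, eps b] [x, y] = (if x = 0 \<and> y = 0 then mps_one k else if x = 1 \<and> y = 0 then eps a
     else if x = 0 \<and> y = 1 then eps b else mps_zero)"
  using eps_mps[OF a] eps_mps[OF b]
  by (simp add: mps_pow_eps[OF a] mps_pow_eps[OF b] mps_mult_one_left mps_mult_one_right mps_mult_eps_eps)

lemma (in fgl_group) cadd_lift_eps:
  assumes a: "a \<in> cochains n" and b: "b \<in> cochains n"
  shows "cadd (lift G) n (eps a) (eps b) = eps (mps_add a b)"
proof (rule ext)
  fix e
  show "cadd (lift G) n (eps a) (eps b) e = eps (mps_add a b) e"
  proof (cases "length e = n")
    case False
    have "eps (mps_add a b) \<in> mps n" using eps_mps mps_add_in_mps cochain_mps a b by blast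
    then show ?thesis using False by (simp add: cadd_def mps_comp_out mps_out)
  next
    case True
    define N where "N = sum_list e + 1"
    have o: "\<forall>h\<in>set [eps a, eps b]. ord_ge 1 h"
      using cochain_ord[OF eps_cochain[OF a]] cochain_ord[OF eps_cochain[OF b]] by simp
    have am: "a \<in> mps n" and bm: "b \<in> mps n" using a b by (simp_all add: cochain_mps)
    have "cadd (lift G) n (eps a) (eps b) e = (\<Sum>d\<in>bounded_exps 2 N. lift G d * mps_monom n [eps a, eps b] d e)"
      using mps_comp_range[of e n "[eps a, eps b]" N "lift G"] True o by (simp add: cadd_def N_def numeral_2_eq_2)
    also have "\<dots> = (\<Sum>d\<in>bounded_exps 2 N. (if d = [1,0] then eps a e else 0) + (if d = [0,1] then eps b e else 0))"
    proof (rule sum.cong[OF refl])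
      fix d assume "d \<in> bounded_exps 2 N"
      then obtain x y where d: "d = [x, y]" using bounded_exps_2 by blast
      show "lift G d * mps_monom n [eps a, eps b] d e
          = (if d = [1,0] then eps a e else 0) + (if d = [0,1] then eps b e else 0)"
        unfolding d mps_monom_eps[OF am bm]
        by (auto simp: mps_map_def G_linear_coeffs dual_zero[symmetric] dual_one[symmetric] mps_zero_def)
    qed
    also have "\<dots> = eps a e + eps b e"
    proof -
      have m: "[1,0] \<in> bounded_exps 2 N" "[0,1] \<in> bounded_exps 2 N" by (simp_all add: bounded_exps_def N_def)
      show ?thesis by (simp only: sum.distrib sum.delta[OF finite_bounded_exps] m if_True)
    qed
    also have "\<dots> = eps (mps_add a b) e" by (simp only: eps_add) (simp add: mps_add_def)
    finally show ?thesis .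
  qed
qed

lemma face_lift_eps: "face (lift F) n i (eps h) = eps (face F n i h)"
  unfolding face_def face_subst_map[OF is_ring_hom_lift, symmetric] by (rule mps_comp_eps_lift)

lemma mps_map_Ga: "is_ring_hom \<psi> \<Longrightarrow> mps_map \<psi> Ga = Ga"
  by (simp add: Ga_def mps_map_add mps_map_var)

lemma cadd_Ga: "a \<in> cochains k \<Longrightarrow> b \<in> cochains k \<Longrightarrow> cadd Ga k a b = mps_add a b"
  by (simp add: cadd_def mps_comp_Ga)

lemma cochain_map_eps:
  assumes "fgl F" "fgl G"
  shows "cochain_map F Ga (lift F) (lift G) eps"
proof -
  interpret G: fgl_group G by (rule fgl_group.intro[OF assms(2)])
  show ?thesis
    by (intro cochain_map.intro cochain_map_axioms.intro fgl_pair.intro fgl_map[OF is_ring_hom_lift] assms fgl_Ga)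
       (simp_all add: eps_cochain cadd_Ga G.cadd_lift_eps face_lift_eps)
qed

lemma dual_map_lift: "is_ring_hom \<psi> \<Longrightarrow> mps_map (dual_map \<psi>) (lift f) = lift (mps_map \<psi> f)"
  by (rule ext) (simp add: mps_map_def dual_map_def is_ring_hom_0)

lemma dual_map_eps: "is_ring_hom \<psi> \<Longrightarrow> mps_map (dual_map \<psi>) (eps h) = eps (mps_map \<psi> h)"
  by (rule ext) (simp add: mps_map_def dual_map_def is_ring_hom_0 eps_def)

section \<open>The comparison map\<close>

locale tangent_setting =
  fixes \<phi> :: "'r::comm_ring_1 \<Rightarrow> 's::comm_ring_1" and F G :: "'r mps"
  assumes hom_\<phi>: "is_ring_hom \<phi>" and fgl_F: "fgl F" and fgl_G: "fgl G"
begin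

abbreviation "Fs \<equiv> mps_map \<phi> F"
abbreviation "Gs \<equiv> mps_map \<phi> G"

lemma fgl_Fs: "fgl Fs" by (rule fgl_map[OF hom_\<phi> fgl_F])
lemma fgl_Gs: "fgl Gs" by (rule fgl_map[OF hom_\<phi> fgl_G])

lemma dual_base_eq_lift: "mps_map (dual_base \<phi>) H = lift (mps_map \<phi> H)"
  by (simp add: mps_map_map lift_dual_base)

text \<open>The prefixes S, D and A stand for the cohomology of F with coefficients in G over S,
  in G over S[eps], and in G_a over S.\<close>

sublocale S: fgl_pair Fs Gs by (rule fgl_pair.intro[OF fgl_Fs fgl_Gs])
sublocale D: fgl_pair "lift Fs" "lift Gs"
  by (rule fgl_pair.intro[OF fgl_map[OF is_ring_hom_lift fgl_Fs] fgl_map[OF is_ring_hom_lift fgl_Gs]])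
sublocale A: fgl_pair Fs Ga by (rule fgl_pair.intro[OF fgl_Fs fgl_Ga])

sublocale eps: cochain_map Fs Ga "lift Fs" "lift Gs" eps
  by (rule cochain_map_eps[OF fgl_Fs fgl_Gs])

sublocale red: cochain_map "lift Fs" "lift Gs" Fs Gs red
  using cochain_map_base_change[OF fgl_map[OF is_ring_hom_lift fgl_Fs] fgl_map[OF is_ring_hom_lift fgl_Gs] is_ring_hom_dre]
  by (simp add: red_lift)

sublocale lift: cochain_map Fs Gs "lift Fs" "lift Gs" lift
  by (rule cochain_map_base_change[OF fgl_Fs fgl_Gs is_ring_hom_lift])

lemma comparison_eq_induced: "tangent_comparison \<phi> F G n = induced_cohom_map eps (lift Fs) (lift Gs) n"
  by (simp add: fun_eq_iff tangent_comparison_def induced_cohom_map_def dual_base_eq_lift eps_def)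

lemma comparison_class:
  "h \<in> cochains n \<Longrightarrow> tangent_comparison \<phi> F G n (cohom_class Fs Ga n h) = cohom_class (lift Fs) (lift Gs) n (eps h)"
  by (simp add: comparison_eq_induced eps.induced_cohom_class)

lemma tangent_cohom_carrier:
  "carrier (tangent_cohom \<phi> F G n) =
     {C \<in> carrier (cohom (lift Fs) (lift Gs) n). induced_cohom_map red Fs Gs n C = coboundaries Fs Gs n}"
  by (simp add: tangent_cohom_def cohomR_def dual_base_eq_lift cohom_map_induced S.cohom_one)

lemma comparison_hom: "tangent_comparison \<phi> F G n \<in> hom (cohom_Ga \<phi> F n) (tangent_cohom \<phi> F G n)"
proof -
  have hom: "tangent_comparison \<phi> F G n \<in> hom (cohom Fs Ga n) (cohom (lift Fs) (lift Gs) n)"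
    by (simp add: comparison_eq_induced eps.induced_cohom_hom)
  have "tangent_comparison \<phi> F G n C \<in> carrier (tangent_cohom \<phi> F G n)" if C: "C \<in> carrier (cohom Fs Ga n)" for C
  proof -
    obtain h where h: "h \<in> cocycles Fs Ga n" "C = cohom_class Fs Ga n h"
      using C A.cohom_carrier by auto
    then have hc: "h \<in> cochains n" using A.cocycles_sub by auto
    have "induced_cohom_map red Fs Gs n (cohom_class (lift Fs) (lift Gs) n (eps h)) = coboundaries Fs Gs n"
      by (simp add: red.induced_cohom_class eps_cochain hc red_eps S.cohom_class_zero)
    then show ?thesis
      using hom_in_carrier[OF hom C] h by (simp add: tangent_cohom_carrier comparison_class[OF hc])
  qed
  with hom show ?thesis
    by (auto simp: hom_def cohom_Ga_def tangent_cohom_def cohomR_def dual_base_eq_lift)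
qed

lemma tangent_decomposition:
  assumes x: "x \<in> cochains m"
  obtains k where "k \<in> cochains m" "x = cadd (lift Gs) m (lift (red x)) (eps k)"
proof -
  let ?l = "lift (red x)"
  have l: "?l \<in> cochains m" using x by (simp add: lift.maps_cochains red.maps_cochains)
  define z where "z = cadd (lift Gs) m (cneg (lift Gs) m ?l) x"
  have zc: "z \<in> cochains m" unfolding z_def by (intro D.G.cadd_closed D.G.cneg_cochain l x)
  have "red z = cadd Gs m (cneg Gs m (red x)) (red x)"
    using x l by (simp add: z_def red.maps_cadd red.maps_cneg D.G.cneg_cochain red_lift)
  also have "\<dots> = mps_zero"
    using x S.G.cadd_cneg S.G.cadd_comm S.G.cneg_cochain red.maps_cochains by metis
  finally have "z = eps (mps_map deps z)" by (rule red_zero_eps)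
  moreover have "x = cadd (lift Gs) m ?l z"
    using x l D.G.cadd_assoc[symmetric] D.G.cadd_cneg D.G.cadd_l0 D.G.cneg_cochain
    by (simp add: z_def)
  ultimately show ?thesis using that deps_cochain[OF zc] by metis
qed

lemma coboundary_decomposition:
  assumes x0: "x0 \<in> cocycles Fs Gs m" and k: "k \<in> cochains m"
  shows "coboundary (lift Fs) (lift Gs) m (cadd (lift Gs) m (lift x0) (eps k)) = eps (coboundary Fs Ga m k)"
proof -
  have x0c: "x0 \<in> cochains m" using x0 S.cocycles_sub by blast
  have "coboundary (lift Fs) (lift Gs) m (cadd (lift Gs) m (lift x0) (eps k))
      = cadd (lift Gs) (m+1) (coboundary (lift Fs) (lift Gs) m (lift x0)) (coboundary (lift Fs) (lift Gs) m (eps k))"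
    by (rule D.coboundary_cadd) (simp_all add: lift.maps_cochains x0c eps_cochain k)
  also have "coboundary (lift Fs) (lift Gs) m (lift x0) = mps_zero"
    using lift.maps_cocycles[OF x0] by (simp add: cocycles_def)
  also have "coboundary (lift Fs) (lift Gs) m (eps k) = eps (coboundary Fs Ga m k)"
    by (rule eps.maps_coboundary[OF k, symmetric])
  finally show ?thesis
    by (simp add: D.G.cadd_l0 eps_cochain A.coboundary_cochain k)
qed

lemma eps_coboundary_imp:
  assumes w: "w \<in> cochains n" and ew: "eps w \<in> coboundaries (lift Fs) (lift Gs) n"
  shows "w \<in> coboundaries Fs Ga n"
proof (cases n)
  case 0
  then have "eps w = eps mps_zero" using ew by (simp add: coboundaries_def)
  then have "w = mps_zero" by (rule eps_inj)
  then show ?thesis using 0 by (simp add: coboundaries_def)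
next
  case (Suc m)
  then obtain x where x: "x \<in> cochains m" "eps w = coboundary (lift Fs) (lift Gs) m x"
    using ew by (auto simp: coboundaries_def)
  have "coboundary Fs Gs m (red x) = mps_zero"
    using red.maps_coboundary[OF x(1)] x(2) red_eps by metis
  then have x0: "red x \<in> cocycles Fs Gs m" using red.maps_cochains[OF x(1)] by (simp add: cocycles_def)
  obtain k where k: "k \<in> cochains m" "x = cadd (lift Gs) m (lift (red x)) (eps k)"
    using tangent_decomposition[OF x(1)] .
  have "eps w = eps (coboundary Fs Ga m k)"
    using x(2) k(2) coboundary_decomposition[OF x0 k(1)] by simp
  then show ?thesis using Suc k(1) eps_inj by (auto simp: coboundaries_def)
qed

lemma comparison_inj: "inj_on (tangent_comparison \<phi> F G n) (carrier (cohom_Ga \<phi> F n))"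
proof (rule inj_onI)
  fix C C' assume "C \<in> carrier (cohom_Ga \<phi> F n)" "C' \<in> carrier (cohom_Ga \<phi> F n)"
    and eq: "tangent_comparison \<phi> F G n C = tangent_comparison \<phi> F G n C'"
  then obtain h h' where h: "h \<in> cocycles Fs Ga n" "C = cohom_class Fs Ga n h"
      "h' \<in> cocycles Fs Ga n" "C' = cohom_class Fs Ga n h'"
    by (auto simp: cohom_Ga_def A.cohom_carrier)
  then have hc: "h \<in> cochains n" "h' \<in> cochains n" using A.cocycles_sub by auto
  have d: "cadd Ga n h (cneg Ga n h') \<in> cochains n" using hc by (simp add: A.G.cadd_closed A.G.cneg_cochain)
  have "cadd (lift Gs) n (eps h) (cneg (lift Gs) n (eps h')) \<in> coboundaries (lift Fs) (lift Gs) n"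
    using eq h(2,4) hc by (simp add: comparison_class D.cohom_class_eq_iff eps_cochain)
  then have "eps (cadd Ga n h (cneg Ga n h')) \<in> coboundaries (lift Fs) (lift Gs) n"
    using hc by (simp add: eps.maps_cadd eps.maps_cneg A.G.cneg_cochain)
  then have "cadd Ga n h (cneg Ga n h') \<in> coboundaries Fs Ga n" by (rule eps_coboundary_imp[OF d])
  then show "C = C'" using h(2,4) hc by (simp add: A.cohom_class_eq_iff)
qed

lemma comparison_surj:
  "carrier (tangent_cohom \<phi> F G n) \<subseteq> tangent_comparison \<phi> F G n ` carrier (cohom_Ga \<phi> F n)"
proof
  fix C assume "C \<in> carrier (tangent_cohom \<phi> F G n)"
  then obtain g where g: "g \<in> cocycles (lift Fs) (lift Gs) n" "C = cohom_class (lift Fs) (lift Gs) n g"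
      and red_trivial: "induced_cohom_map red Fs Gs n C = coboundaries Fs Gs n"
    by (auto simp: tangent_cohom_carrier D.cohom_carrier)
  have gc: "g \<in> cochains n" using g(1) D.cocycles_sub by blast
  have "red g \<in> coboundaries Fs Gs n"
    using red_trivial g(2) gc by (simp add: red.induced_cohom_class S.cohom_class_eq_coboundaries red.maps_cochains)
  then have lift_red: "lift (red g) \<in> coboundaries (lift Fs) (lift Gs) n" by (rule lift.maps_coboundaries)
  obtain k where k: "k \<in> cochains n" "g = cadd (lift Gs) n (lift (red g)) (eps k)"
    using tangent_decomposition[OF gc] .
  have "eps (coboundary Fs Ga n k) = eps mps_zero"
    using coboundary_decomposition[OF red.maps_cocycles[OF g(1)] k(1)] k(2) g(1)
    by (simp add: cocycles_def)
  then have "coboundary Fs Ga n k = mps_zero" by (rule eps_inj)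
  then have kz: "k \<in> cocycles Fs Ga n" using k(1) by (simp add: cocycles_def)
  have "C = tangent_comparison \<phi> F G n (cohom_class Fs Ga n k)"
    using g(2) k D.cohom_class_cadd_coboundary[OF lift_red eps_cochain[OF k(1)]] by (simp add: comparison_class)
  then show "C \<in> tangent_comparison \<phi> F G n ` carrier (cohom_Ga \<phi> F n)"
    using kz by (auto simp: cohom_Ga_def A.cohom_carrier)
qed

lemma comparison_iso: "tangent_comparison \<phi> F G n \<in> iso (cohom_Ga \<phi> F n) (tangent_cohom \<phi> F G n)"
proof -
  have "tangent_comparison \<phi> F G n ` carrier (cohom_Ga \<phi> F n) = carrier (tangent_cohom \<phi> F G n)"
    using comparison_surj hom_in_carrier[OF comparison_hom] by blast
  then show ?thesis using comparison_hom comparison_inj by (simp add: iso_def bij_betw_def)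
qed

lemma comparison_natural:
  fixes \<psi> :: "'s \<Rightarrow> 't::comm_ring_1"
  assumes hom_\<psi>: "is_ring_hom \<psi>" and C: "C \<in> carrier (cohom_Ga \<phi> F n)"
  shows "tangent_comparison (\<psi> \<circ> \<phi>) F G n (cohom_map \<psi> (mps_map (\<psi> \<circ> \<phi>) F) Ga n C)
       = cohom_map (dual_map \<psi>) (mps_map (dual_base (\<psi> \<circ> \<phi>)) F) (mps_map (dual_base (\<psi> \<circ> \<phi>)) G) n
           (tangent_comparison \<phi> F G n C)"
proof -
  interpret M: tangent_setting "\<psi> \<circ> \<phi>" F G
    by (rule tangent_setting.intro[OF is_ring_hom_comp[OF hom_\<psi> hom_\<phi>] fgl_F fgl_G])
  interpret base_A: cochain_map Fs Ga "mps_map (\<psi> \<circ> \<phi>) F" Ga "mps_map \<psi>"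
    using cochain_map_base_change[OF fgl_Fs fgl_Ga hom_\<psi>] by (simp add: mps_map_map mps_map_Ga[OF hom_\<psi>])
  interpret base_D: cochain_map "lift Fs" "lift Gs" "lift (mps_map (\<psi> \<circ> \<phi>) F)" "lift (mps_map (\<psi> \<circ> \<phi>) G)"
      "mps_map (dual_map \<psi>)"
    using cochain_map_base_change[OF D.fgl_F D.fgl_G is_ring_hom_dual_map[OF hom_\<psi>], unfolded dual_map_lift[OF hom_\<psi>]]
    by (simp add: mps_map_map)
  obtain h where h: "h \<in> cocycles Fs Ga n" "C = cohom_class Fs Ga n h"
    using C by (auto simp: cohom_Ga_def A.cohom_carrier)
  then have hc: "h \<in> cochains n" using A.cocycles_sub by blast
  have "tangent_comparison (\<psi> \<circ> \<phi>) F G n (cohom_map \<psi> (mps_map (\<psi> \<circ> \<phi>) F) Ga n C)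
      = cohom_class (lift (mps_map (\<psi> \<circ> \<phi>) F)) (lift (mps_map (\<psi> \<circ> \<phi>) G)) n (eps (mps_map \<psi> h))"
    using hc by (simp add: h(2) cohom_map_induced base_A.induced_cohom_class M.comparison_class base_A.maps_cochains)
  also have "\<dots> = cohom_map (dual_map \<psi>) (mps_map (dual_base (\<psi> \<circ> \<phi>)) F) (mps_map (dual_base (\<psi> \<circ> \<phi>)) G) n
      (tangent_comparison \<phi> F G n C)"
    using hc by (simp add: h(2) comparison_class cohom_map_induced M.dual_base_eq_lift base_D.induced_cohom_class
        eps_cochain dual_map_eps[OF hom_\<psi>])
  finally show ?thesis .
qed

end

theorem mainTheorem3:
  fixes \<phi> :: "'r::comm_ring_1 \<Rightarrow> 's::comm_ring_1"
    and F G :: "'r mps"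
    and n :: nat
  assumes "is_ring_hom \<phi>" and "fgl F" and "fgl G"
  shows "tangent_comparison \<phi> F G n \<in> iso (cohom_Ga \<phi> F n) (tangent_cohom \<phi> F G n)
    \<and> (\<forall>(\<phi>' :: 'r \<Rightarrow> 't::comm_ring_1) \<psi>. is_ring_hom \<phi>' \<longrightarrow> is_ring_hom \<psi> \<longrightarrow> \<psi> \<circ> \<phi> = \<phi>' \<longrightarrow>
         (\<forall>C \<in> carrier (cohom_Ga \<phi> F n).
            tangent_comparison \<phi>' F G n (cohom_map \<psi> (mps_map \<phi>' F) Ga n C)
            = cohom_map (dual_map \<psi>) (mps_map (dual_base \<phi>') F) (mps_map (dual_base \<phi>') G) n
                (tangent_comparison \<phi> F G n C)))"
proof -
  interpret tangent_setting \<phi> F G by (rule tangent_setting.intro[OF assms])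
  show ?thesis
    using comparison_iso comparison_natural by (intro conjI allI impI ballI) blast+
qed

end
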